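(* Let $\mathcal{C}$ be a pre-Hilbert $*$-category and $A$ an object of $\mathcal{C}$. Then: (1) $\mathcal{C}(A,A)$, with addition from the unique enrichment of $\mathcal{C}$ in abelian groups, multiplication given by composition, involution given by the restriction of the involution of $\mathcal{C}$, and positive cone $\mathcal{C}(A,A)_+ = \{x^*x : x\in\mathcal{C}(A,X) \text{ for some object } X\}$, is an ordered $*$-ring; (2) for each object $X$, $\mathcal{C}(A,X)$, with addition from the enrichment and right scalar multiplication by $\mathcal{C}(A,A)$ given by composition, is an inner product right $\mathcal{C}(A,A)$-module with inner product $\langle x,y\rangle = x^*y$; (3) for each morphism $f\colon X\to Y$ of $\mathcal{C}$, the map $\mathcal{C}(A,f)\colon \mathcal{C}(A,X)\to\mathcal{C}(A,Y)$, $x\mapsto fx$, is adjointable with adjoint $\mathcal{C}(A,f^* )$. Consequently the hom-functor $\mathcal{C}(A,-)$ factors through the forgetful functor $\mathbf{InnerProd}_{\mathcal{C}(A,A)}\to\mathbf{Set}$ via a $*$-functor $\mathcal{C}\to\mathbf{InnerProd}_{\mathcal{C}(A,A)}$.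
   Context: A $*$-category is a category with a choice of $f^*\colon Y\to X$ for each $f\colon X\to Y$ such that $1^*=1$, $(gf)^*=f^*g^*$, $(f^* )^*=f$; a $*$-functor is a functor $F$ between $*$-categories with $F(f^* )=(Ff)^*$. A pre-Hilbert $*$-category is a $*$-category with (R1) a zero object, (R2) orthonormal biproducts of all pairs of objects (biproducts $(X,s_1,r_1,s_2,r_2)$ with $r_k=s_k^*$), (R3) an isometric kernel (kernel $m$ with $m^*m=1$) for every morphism, and (R4) every diagonal $\Delta\colon X\to X\oplus X$ a kernel of some morphism; such a category is additive. A $*$-ring is a ring $R$ with a map $r\mapsto r^*$ satisfying $1^*=1$, $(sr)^*=r^*s^*$, $(r^* )^*=r$, $(r+s)^*=r^*+s^*$; it is anisotropic if $r^*r=0$ implies $r=0$. $R_{\mathrm{sa}}$ denotes the set of Hermitian elements ($a^*=a$). A positive cone on $R$ is a subset $P\subseteq R_{\mathrm{sa}}$ with $1\in P$, $P+P\subseteq P$, $r^*Pr\subseteq P$ for all $r\in R$, and $P\cap -P=\{0\}$. An ordered $*$-ring is an anisotropic $*$-ring with a positive cone $R_+$ (equivalently the order $a\le b$ iff $b-a\in R_+$). For an ordered $*$-ring $R$ and right $R$-module $X$, an inner product is a map $\langle-,-\rangle\colon X\times X\to R$ with $\langle x,yr+z\rangle=\langle x,y\rangle r+\langle x,z\rangle$, $\langle x,y\rangle^*=\langle y,x\rangle$, $\langle x,x\rangle\in R_+$, and $\langle x,x\rangle=0\Rightarrow x=0$. A function $f\colon X\to Y$ between inner product $R$-modules is adjointable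 if there is $f^*\colon Y\to X$ with $\langle f^*y,x\rangle=\langle y,fx\rangle$ for all $x,y$. $\mathbf{InnerProd}_R$ is the $*$-category of inner product $R$-modules and adjointable maps. *)

theory Defs
  imports "HOL-Algebra.Ring"
begin

record ('o,'m) star_cat =
  obj :: "'o set"
  mor :: "'m set"
  dm  :: "'m \<Rightarrow> 'o"
  cd  :: "'m \<Rightarrow> 'o"
  cmp :: "'m \<Rightarrow> 'm \<Rightarrow> 'm"   (* cmp g f = g \<circ> f *)
  idt :: "'o \<Rightarrow> 'm"
  str :: "'m \<Rightarrow> 'm"

definition Hom :: "('o,'m,'z) star_cat_scheme \<Rightarrow> 'o \<Rightarrow> 'o \<Rightarrow> 'm set" where
  "Hom C X Y = {f \<in> mor C. dm C f = X \<and> cd C f = Y}"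

definition is_category :: "('o,'m,'z) star_cat_scheme \<Rightarrow> bool" where
  "is_category C \<longleftrightarrow>
     (\<forall>f\<in>mor C. dm C f \<in> obj C \<and> cd C f \<in> obj C) \<and>
     (\<forall>X\<in>obj C. idt C X \<in> Hom C X X) \<and>
     (\<forall>f\<in>mor C. \<forall>g\<in>mor C. cd C f = dm C g \<longrightarrow> cmp C g f \<in> Hom C (dm C f) (cd C g)) \<and>
     (\<forall>f\<in>mor C. cmp C (idt C (cd C f)) f = f \<and> cmp C f (idt C (dm C f)) = f) \<and>
     (\<forall>f\<in>mor C. \<forall>g\<in>mor C. \<forall>h\<in>mor C. cd C f = dm C g \<longrightarrow> cd C g = dm C h \<longrightarrow>
        cmp C h (cmp C g f) = cmp C (cmp C h g) f)"

definition is_star_category :: "('o,'m,'z) star_cat_scheme \<Rightarrow> bool" where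
  "is_star_category C \<longleftrightarrow> is_category C \<and>
     (\<forall>f\<in>mor C. str C f \<in> Hom C (cd C f) (dm C f)) \<and>
     (\<forall>X\<in>obj C. str C (idt C X) = idt C X) \<and>
     (\<forall>f\<in>mor C. \<forall>g\<in>mor C. cd C f = dm C g \<longrightarrow> str C (cmp C g f) = cmp C (str C f) (str C g)) \<and>
     (\<forall>f\<in>mor C. str C (str C f) = f)"

definition zero_object :: "('o,'m,'z) star_cat_scheme \<Rightarrow> 'o \<Rightarrow> bool" where
  "zero_object C Z \<longleftrightarrow> Z \<in> obj C \<and>
     (\<forall>X\<in>obj C. (\<exists>!f. f \<in> Hom C X Z) \<and> (\<exists>!f. f \<in> Hom C Z X))"

definition zero_mor :: "('o,'m,'z) star_cat_scheme \<Rightarrow> 'm \<Rightarrow> bool" where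
  "zero_mor C f \<longleftrightarrow> f \<in> mor C \<and> (\<exists>Z. zero_object C Z \<and>
     (\<exists>a b. a \<in> Hom C (dm C f) Z \<and> b \<in> Hom C Z (cd C f) \<and> f = cmp C b a))"

definition biproduct :: "('o,'m,'z) star_cat_scheme \<Rightarrow> 'o \<Rightarrow> 'o \<Rightarrow> 'o \<Rightarrow> 'm \<Rightarrow> 'm \<Rightarrow> 'm \<Rightarrow> 'm \<Rightarrow> bool" where
  "biproduct C X1 X2 P s1 r1 s2 r2 \<longleftrightarrow>
     X1 \<in> obj C \<and> X2 \<in> obj C \<and> P \<in> obj C \<and>
     s1 \<in> Hom C X1 P \<and> r1 \<in> Hom C P X1 \<and> s2 \<in> Hom C X2 P \<and> r2 \<in> Hom C P X2 \<and>
     cmp C r1 s1 = idt C X1 \<and> cmp C r2 s2 = idt C X2 \<and>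
     zero_mor C (cmp C r2 s1) \<and> zero_mor C (cmp C r1 s2) \<and>
     (\<forall>W\<in>obj C. \<forall>f1\<in>Hom C W X1. \<forall>f2\<in>Hom C W X2.
        \<exists>!h. h \<in> Hom C W P \<and> cmp C r1 h = f1 \<and> cmp C r2 h = f2) \<and>
     (\<forall>W\<in>obj C. \<forall>g1\<in>Hom C X1 W. \<forall>g2\<in>Hom C X2 W.
        \<exists>!h. h \<in> Hom C P W \<and> cmp C h s1 = g1 \<and> cmp C h s2 = g2)"

definition orthonormal_biproduct :: "('o,'m,'z) star_cat_scheme \<Rightarrow> 'o \<Rightarrow> 'o \<Rightarrow> 'o \<Rightarrow> 'm \<Rightarrow> 'm \<Rightarrow> bool" where
  "orthonormal_biproduct C X1 X2 P s1 s2 \<longleftrightarrow> biproduct C X1 X2 P s1 (str C s1) s2 (str C s2)"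

definition kernel :: "('o,'m,'z) star_cat_scheme \<Rightarrow> 'm \<Rightarrow> 'm \<Rightarrow> bool" where
  "kernel C f m \<longleftrightarrow> f \<in> mor C \<and> m \<in> mor C \<and> cd C m = dm C f \<and> zero_mor C (cmp C f m) \<and>
     (\<forall>g\<in>mor C. cd C g = dm C f \<longrightarrow> zero_mor C (cmp C f g) \<longrightarrow>
        (\<exists>!h. h \<in> Hom C (dm C g) (dm C m) \<and> cmp C m h = g))"

definition pre_hilbert :: "('o,'m,'z) star_cat_scheme \<Rightarrow> bool" where
  "pre_hilbert C \<longleftrightarrow> is_star_category C \<and>
     (\<exists>Z. zero_object C Z) \<and>
     (\<forall>X1\<in>obj C. \<forall>X2\<in>obj C. \<exists>P s1 s2. orthonormal_biproduct C X1 X2 P s1 s2) \<and>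
     (\<forall>f\<in>mor C. \<exists>m. kernel C f m \<and> cmp C (str C m) m = idt C (dm C m)) \<and>
     (\<forall>X\<in>obj C. \<forall>P s1 s2 d. orthonormal_biproduct C X X P s1 s2 \<longrightarrow> d \<in> Hom C X P \<longrightarrow>
        cmp C (str C s1) d = idt C X \<longrightarrow> cmp C (str C s2) d = idt C X \<longrightarrow>
        (\<exists>f\<in>mor C. kernel C f d))"

definition ab_enrichment :: "('o,'m,'z) star_cat_scheme \<Rightarrow> ('m \<Rightarrow> 'm \<Rightarrow> 'm) \<Rightarrow> bool" where
  "ab_enrichment C pl \<longleftrightarrow>
     (\<forall>X\<in>obj C. \<forall>Y\<in>obj C. \<exists>z. comm_group \<lparr>carrier = Hom C X Y, mult = pl, one = z\<rparr>) \<and>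
     (\<forall>W\<in>obj C. \<forall>X\<in>obj C. \<forall>Y\<in>obj C. \<forall>Z\<in>obj C.
        \<forall>f\<in>Hom C X Y. \<forall>g\<in>Hom C X Y. \<forall>h\<in>Hom C Y Z. \<forall>k\<in>Hom C W X.
          cmp C h (pl f g) = pl (cmp C h f) (cmp C h g) \<and>
          cmp C (pl f g) k = pl (cmp C f k) (cmp C g k))"

definition mzero :: "'m set \<Rightarrow> ('m \<Rightarrow> 'm \<Rightarrow> 'm) \<Rightarrow> 'm" where
  "mzero M pl = (THE z. z \<in> M \<and> (\<forall>x\<in>M. pl z x = x))"

definition endo_ring :: "('o,'m,'z) star_cat_scheme \<Rightarrow> ('m \<Rightarrow> 'm \<Rightarrow> 'm) \<Rightarrow> 'o \<Rightarrow> 'm ring" where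
  "endo_ring C pl A = \<lparr>carrier = Hom C A A, mult = cmp C, one = idt C A,
       zero = mzero (Hom C A A) pl, add = pl\<rparr>"

definition pos_cone_of :: "('o,'m,'z) star_cat_scheme \<Rightarrow> 'o \<Rightarrow> 'm set" where
  "pos_cone_of C A = {cmp C (str C x) x | x X. X \<in> obj C \<and> x \<in> Hom C A X}"

definition star_ring :: "('r,'b) ring_scheme \<Rightarrow> ('r \<Rightarrow> 'r) \<Rightarrow> bool" where
  "star_ring R iv \<longleftrightarrow> ring R \<and> (\<forall>r\<in>carrier R. iv r \<in> carrier R) \<and>
     iv \<one>\<^bsub>R\<^esub> = \<one>\<^bsub>R\<^esub> \<and>
     (\<forall>r\<in>carrier R. \<forall>s\<in>carrier R. iv (s \<otimes>\<^bsub>R\<^esub> r) = iv r \<otimes>\<^bsub>R\<^esub> iv s) \<and>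
     (\<forall>r\<in>carrier R. iv (iv r) = r) \<and>
     (\<forall>r\<in>carrier R. \<forall>s\<in>carrier R. iv (r \<oplus>\<^bsub>R\<^esub> s) = iv r \<oplus>\<^bsub>R\<^esub> iv s)"

definition anisotropic :: "('r,'b) ring_scheme \<Rightarrow> ('r \<Rightarrow> 'r) \<Rightarrow> bool" where
  "anisotropic R iv \<longleftrightarrow> (\<forall>r\<in>carrier R. iv r \<otimes>\<^bsub>R\<^esub> r = \<zero>\<^bsub>R\<^esub> \<longrightarrow> r = \<zero>\<^bsub>R\<^esub>)"

definition positive_cone :: "('r,'b) ring_scheme \<Rightarrow> ('r \<Rightarrow> 'r) \<Rightarrow> 'r set \<Rightarrow> bool" where
  "positive_cone R iv P \<longleftrightarrow>
     P \<subseteq> {a \<in> carrier R. iv a = a} \<and> \<one>\<^bsub>R\<^esub> \<in> P \<and>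
     (\<forall>a\<in>P. \<forall>b\<in>P. a \<oplus>\<^bsub>R\<^esub> b \<in> P) \<and>
     (\<forall>r\<in>carrier R. \<forall>a\<in>P. iv r \<otimes>\<^bsub>R\<^esub> a \<otimes>\<^bsub>R\<^esub> r \<in> P) \<and>
     P \<inter> (\<lambda>a. \<ominus>\<^bsub>R\<^esub> a) ` P = {\<zero>\<^bsub>R\<^esub>}"

definition ordered_star_ring :: "('r,'b) ring_scheme \<Rightarrow> ('r \<Rightarrow> 'r) \<Rightarrow> 'r set \<Rightarrow> bool" where
  "ordered_star_ring R iv P \<longleftrightarrow> star_ring R iv \<and> anisotropic R iv \<and> positive_cone R iv P"

definition right_module :: "('r,'b) ring_scheme \<Rightarrow> 'm set \<Rightarrow> ('m \<Rightarrow> 'm \<Rightarrow> 'm) \<Rightarrow> ('m \<Rightarrow> 'r \<Rightarrow> 'm) \<Rightarrow> bool" where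
  "right_module R M pl act \<longleftrightarrow> ring R \<and>
     (\<exists>z. comm_group \<lparr>carrier = M, mult = pl, one = z\<rparr>) \<and>
     (\<forall>x\<in>M. \<forall>r\<in>carrier R. act x r \<in> M) \<and>
     (\<forall>x\<in>M. \<forall>y\<in>M. \<forall>r\<in>carrier R. act (pl x y) r = pl (act x r) (act y r)) \<and>
     (\<forall>x\<in>M. \<forall>r\<in>carrier R. \<forall>s\<in>carrier R. act x (r \<oplus>\<^bsub>R\<^esub> s) = pl (act x r) (act x s)) \<and>
     (\<forall>x\<in>M. \<forall>r\<in>carrier R. \<forall>s\<in>carrier R. act x (r \<otimes>\<^bsub>R\<^esub> s) = act (act x r) s) \<and>
     (\<forall>x\<in>M. act x \<one>\<^bsub>R\<^esub> = x)"

definition inner_product_module ::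
  "('r,'b) ring_scheme \<Rightarrow> ('r \<Rightarrow> 'r) \<Rightarrow> 'r set \<Rightarrow> 'm set \<Rightarrow> ('m \<Rightarrow> 'm \<Rightarrow> 'm) \<Rightarrow> ('m \<Rightarrow> 'r \<Rightarrow> 'm)
     \<Rightarrow> ('m \<Rightarrow> 'm \<Rightarrow> 'r) \<Rightarrow> bool" where
  "inner_product_module R iv P M pl act ip \<longleftrightarrow>
     ordered_star_ring R iv P \<and> right_module R M pl act \<and>
     (\<forall>x\<in>M. \<forall>y\<in>M. ip x y \<in> carrier R) \<and>
     (\<forall>x\<in>M. \<forall>y\<in>M. \<forall>z\<in>M. \<forall>r\<in>carrier R.
        ip x (pl (act y r) z) = (ip x y \<otimes>\<^bsub>R\<^esub> r) \<oplus>\<^bsub>R\<^esub> ip x z) \<and>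
     (\<forall>x\<in>M. \<forall>y\<in>M. iv (ip x y) = ip y x) \<and>
     (\<forall>x\<in>M. ip x x \<in> P) \<and>
     (\<forall>x\<in>M. ip x x = \<zero>\<^bsub>R\<^esub> \<longrightarrow> x = mzero M pl)"

definition adjoint_of ::
  "'m set \<Rightarrow> 'n set \<Rightarrow> ('m \<Rightarrow> 'm \<Rightarrow> 'r) \<Rightarrow> ('n \<Rightarrow> 'n \<Rightarrow> 'r) \<Rightarrow> ('m \<Rightarrow> 'n) \<Rightarrow> ('n \<Rightarrow> 'm) \<Rightarrow> bool" where
  "adjoint_of M1 M2 ip1 ip2 f g \<longleftrightarrow>
     (\<forall>x\<in>M1. f x \<in> M2) \<and> (\<forall>y\<in>M2. g y \<in> M1) \<and>
     (\<forall>x\<in>M1. \<forall>y\<in>M2. ip1 (g y) x = ip2 y (f x))"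

end

theory Submission
  imports Defs
begin

text \<open>
  With chosen orthonormal biproducts, every hom-set carries the sum
  \<open>f \<boxplus> g = [f, g] \<cdot> \<Delta>\<close>; the Eckmann--Hilton argument against the dual sum
  \<open>\<nabla> \<cdot> \<langle>f, g\<rangle>\<close> makes it a commutative monoid, composition is bilinear by naturality of
  (co)tupling, and any abelian-group enrichment agrees with it because its units are the zero
  morphisms and \<open>\<iota>\<^sub>1 + \<iota>\<^sub>2 = \<Delta>\<close>.

  Negatives come from (R3) and (R4). The diagonal \<open>\<Delta>\<close> of \<open>X\<close> is a kernel, hence isomorphic to
  an isometric kernel: \<open>k = \<Delta> w\<close> with \<open>w\<close> invertible and \<open>k\<^sup>\<dagger> k = 1\<close>. If \<open>l\<close> is the isometric
  kernel of \<open>k\<^sup>\<dagger>\<close>, the adjoint of \<open>[k, l]\<close> has trivial kernel, and (R4) once more shows that an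
  isometry with this property is unitary, so \<open>k k\<^sup>\<dagger> + l l\<^sup>\<dagger> = 1\<close>. The off-diagonal entry of this
  identity reads \<open>w w\<^sup>\<dagger> + n = 0\<close>, and \<open>w w\<^sup>\<dagger>\<close> is invertible, so \<open>1\<close> has a negative.

  Factoring \<open>x\<close> through the isometric kernel of \<open>x\<^sup>\<dagger>\<close> shows that \<open>x\<^sup>\<dagger> x = 0\<close> forces \<open>x = 0\<close>.
  Together with \<open>\<langle>x, y\<rangle>\<^sup>\<dagger> \<langle>x, y\<rangle> = x\<^sup>\<dagger> x + y\<^sup>\<dagger> y\<close> this yields the positive cone, and the
  inner product axioms are bilinearity together with the dagger laws.
\<close>

lemma endo_ring_simps:
  "carrier (endo_ring C pl A) = Hom C A A" "mult (endo_ring C pl A) = cmp C"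
  "one (endo_ring C pl A) = idt C A" "zero (endo_ring C pl A) = mzero (Hom C A A) pl"
  "add (endo_ring C pl A) = pl"
  unfolding endo_ring_def by simp_all

locale category =
  fixes C :: "('o,'m,'z) star_cat_scheme"
  assumes is_category: "is_category C"
begin

abbreviation arr_comp :: "'m \<Rightarrow> 'm \<Rightarrow> 'm" (infixr "\<cdot>" 70)
  where "g \<cdot> f \<equiv> cmp C g f"

lemma HomD:
  assumes "f \<in> Hom C X Y"
  shows "f \<in> mor C" "dm C f = X" "cd C f = Y"
  using assms unfolding Hom_def by auto

lemma Hom_obj:
  assumes "f \<in> Hom C X Y"
  shows "X \<in> obj C" "Y \<in> obj C"
  using assms is_category unfolding Hom_def is_category_def by auto

lemma comp_in_Hom [intro]: "f \<in> Hom C X Y \<Longrightarrow> g \<in> Hom C Y Z \<Longrightarrow> g \<cdot> f \<in> Hom C X Z"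
  using is_category unfolding is_category_def Hom_def by auto

lemma comp_assoc:
  "f \<in> Hom C W X \<Longrightarrow> g \<in> Hom C X Y \<Longrightarrow> h \<in> Hom C Y Z \<Longrightarrow> h \<cdot> (g \<cdot> f) = (h \<cdot> g) \<cdot> f"
  using is_category unfolding is_category_def Hom_def by auto

lemma id_left: "f \<in> Hom C X Y \<Longrightarrow> idt C Y \<cdot> f = f"
  using is_category unfolding is_category_def Hom_def by auto

lemma id_right: "f \<in> Hom C X Y \<Longrightarrow> f \<cdot> idt C X = f"
  using is_category unfolding is_category_def Hom_def by auto

lemma id_in_Hom [intro]: "X \<in> obj C \<Longrightarrow> idt C X \<in> Hom C X X"
  using is_category unfolding is_category_def by auto

lemma ab_enrichment_group:
  assumes "ab_enrichment C pl" "X \<in> obj C" "Y \<in> obj C"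
  obtains e where "comm_group \<lparr>carrier = Hom C X Y, mult = pl, one = e\<rparr>"
  using assms unfolding ab_enrichment_def by blast

lemma ab_enrichment_comp_left:
  assumes E: "ab_enrichment C pl"
    and f: "f \<in> Hom C X Y" and g: "g \<in> Hom C X Y" and h: "h \<in> Hom C Y Z"
  shows "h \<cdot> pl f g = pl (h \<cdot> f) (h \<cdot> g)"
proof -
  have "\<forall>W\<in>obj C. \<forall>X\<in>obj C. \<forall>Y\<in>obj C. \<forall>Z\<in>obj C.
      \<forall>f\<in>Hom C X Y. \<forall>g\<in>Hom C X Y. \<forall>h\<in>Hom C Y Z. \<forall>k\<in>Hom C W X.
        h \<cdot> pl f g = pl (h \<cdot> f) (h \<cdot> g) \<and> pl f g \<cdot> k = pl (f \<cdot> k) (g \<cdot> k)"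
    using E unfolding ab_enrichment_def by (elim conjE)
  from this[rule_format, OF Hom_obj(1)[OF f] Hom_obj(1)[OF f] Hom_obj(2)[OF f] Hom_obj(2)[OF h]
      f g h id_in_Hom[OF Hom_obj(1)[OF f]]]
  show ?thesis
    by (rule conjunct1)
qed

end

locale zero_category = category C for C :: "('o,'m,'z) star_cat_scheme" +
  assumes has_zero_object: "\<exists>Z. zero_object C Z"
begin

lemma zero_object_obj: "zero_object C Z \<Longrightarrow> Z \<in> obj C"
  unfolding zero_object_def by simp

lemma zero_object_to_eq: "zero_object C Z \<Longrightarrow> a \<in> Hom C X Z \<Longrightarrow> a' \<in> Hom C X Z \<Longrightarrow> a = a'"
  unfolding zero_object_def by (metis Hom_obj(1))

lemma zero_object_from_eq: "zero_object C Z \<Longrightarrow> b \<in> Hom C Z Y \<Longrightarrow> b' \<in> Hom C Z Y \<Longrightarrow> b = b'"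
  unfolding zero_object_def by (metis Hom_obj(2))

lemma zero_object_Hom_ex:
  assumes "zero_object C Z" "X \<in> obj C"
  shows "\<exists>a. a \<in> Hom C X Z" "\<exists>b. b \<in> Hom C Z X"
  using assms unfolding zero_object_def by auto

lemma comp_through_zero_objects_eq:
  assumes Z: "zero_object C Z" and Z': "zero_object C Z'"
    and a: "a \<in> Hom C X Z" and b: "b \<in> Hom C Z Y"
    and a': "a' \<in> Hom C X Z'" and b': "b' \<in> Hom C Z' Y"
  shows "b \<cdot> a = b' \<cdot> a'"
proof -
  obtain c where c: "c \<in> Hom C Z Z'"
    using zero_object_Hom_ex(2)[OF Z zero_object_obj[OF Z']] by blast
  have "b' \<cdot> c = b"
    using zero_object_from_eq[OF Z comp_in_Hom[OF c b'] b] .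
  moreover have "c \<cdot> a = a'"
    using zero_object_to_eq[OF Z' comp_in_Hom[OF a c] a'] .
  ultimately show ?thesis
    using comp_assoc[OF a c b'] by simp
qed

definition zero_hom :: "'o \<Rightarrow> 'o \<Rightarrow> 'm" where
  "zero_hom X Y =
     (THE f. \<exists>Z a b. zero_object C Z \<and> a \<in> Hom C X Z \<and> b \<in> Hom C Z Y \<and> f = b \<cdot> a)"

lemma zero_hom_factor:
  assumes Z: "zero_object C Z" and a: "a \<in> Hom C X Z" and b: "b \<in> Hom C Z Y"
  shows "zero_hom X Y = b \<cdot> a"
  unfolding zero_hom_def
proof (rule the_equality)
  show "\<exists>Z a' b'. zero_object C Z \<and> a' \<in> Hom C X Z \<and> b' \<in> Hom C Z Y \<and> b \<cdot> a = b' \<cdot> a'"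
    using assms by blast
  show "f = b \<cdot> a" if "\<exists>Z a b. zero_object C Z \<and> a \<in> Hom C X Z \<and> b \<in> Hom C Z Y \<and> f = b \<cdot> a"
    for f
    using that comp_through_zero_objects_eq[OF _ Z _ _ a b] by blast
qed

lemma zero_hom_obtain:
  assumes "X \<in> obj C" "Y \<in> obj C"
  obtains Z a b where "zero_object C Z" "a \<in> Hom C X Z" "b \<in> Hom C Z Y" "zero_hom X Y = b \<cdot> a"
proof -
  obtain Z where Z: "zero_object C Z"
    using has_zero_object by blast
  obtain a b where "a \<in> Hom C X Z" "b \<in> Hom C Z Y"
    using zero_object_Hom_ex[OF Z] assms by blast
  then show thesis
    using that Z zero_hom_factor[OF Z] by blast
qed

lemma zero_hom_in_Hom [intro]: "X \<in> obj C \<Longrightarrow> Y \<in> obj C \<Longrightarrow> zero_hom X Y \<in> Hom C X Y"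
  by (metis comp_in_Hom zero_hom_obtain)

lemma comp_zero_hom:
  assumes g: "g \<in> Hom C Y Z" and X: "X \<in> obj C"
  shows "g \<cdot> zero_hom X Y = zero_hom X Z"
proof -
  obtain Z0 a b where Z0: "zero_object C Z0" and a: "a \<in> Hom C X Z0" and b: "b \<in> Hom C Z0 Y"
    and 0: "zero_hom X Y = b \<cdot> a"
    using zero_hom_obtain[OF X Hom_obj(1)[OF g]] .
  have "g \<cdot> zero_hom X Y = (g \<cdot> b) \<cdot> a"
    using 0 comp_assoc[OF a b g] by simp
  also have "\<dots> = zero_hom X Z"
    using zero_hom_factor[OF Z0 a comp_in_Hom[OF b g]] by simp
  finally show ?thesis .
qed

lemma zero_hom_comp:
  assumes f: "f \<in> Hom C X Y" and Z: "Z \<in> obj C"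
  shows "zero_hom Y Z \<cdot> f = zero_hom X Z"
proof -
  obtain Z0 a b where Z0: "zero_object C Z0" and a: "a \<in> Hom C Y Z0" and b: "b \<in> Hom C Z0 Z"
    and 0: "zero_hom Y Z = b \<cdot> a"
    using zero_hom_obtain[OF Hom_obj(2)[OF f] Z] .
  have "zero_hom Y Z \<cdot> f = b \<cdot> (a \<cdot> f)"
    using 0 comp_assoc[OF f a b] by simp
  also have "\<dots> = zero_hom X Z"
    using zero_hom_factor[OF Z0 comp_in_Hom[OF f a] b] by simp
  finally show ?thesis .
qed

lemma zero_mor_iff:
  assumes f: "f \<in> Hom C X Y"
  shows "zero_mor C f \<longleftrightarrow> f = zero_hom X Y"
proof
  assume "zero_mor C f"
  then obtain Z a b where "zero_object C Z" "a \<in> Hom C X Z" "b \<in> Hom C Z Y" "f = b \<cdot> a"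
    using HomD[OF f] unfolding zero_mor_def by auto
  then show "f = zero_hom X Y"
    using zero_hom_factor by simp
next
  assume f0: "f = zero_hom X Y"
  obtain Z a b where "zero_object C Z" "a \<in> Hom C X Z" "b \<in> Hom C Z Y" "zero_hom X Y = b \<cdot> a"
    using zero_hom_obtain[OF Hom_obj[OF f]] .
  then have "f \<in> mor C \<and> zero_object C Z \<and> a \<in> Hom C (dm C f) Z \<and> b \<in> Hom C Z (cd C f) \<and> f = b \<cdot> a"
    using f0 HomD[OF f] by simp
  then show "zero_mor C f"
    unfolding zero_mor_def by blast
qed

lemma kernel_comp_eq_zero:
  assumes "kernel C F m" "F \<in> Hom C P Y" "m \<in> Hom C K P"
  shows "F \<cdot> m = zero_hom K Y"
proof -
  have "zero_mor C (F \<cdot> m)"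
    using assms(1) unfolding kernel_def by (elim conjE)
  then show ?thesis
    using zero_mor_iff[OF comp_in_Hom[OF assms(3,2)]] by simp
qed

lemma kernel_lift:
  assumes K: "kernel C F m" and F: "F \<in> Hom C P Y" and m: "m \<in> Hom C K P"
    and g: "g \<in> Hom C W P" and Fg: "F \<cdot> g = zero_hom W Y"
  obtains h where "h \<in> Hom C W K" "m \<cdot> h = g"
proof -
  have lift: "\<forall>g\<in>mor C. cd C g = dm C F \<longrightarrow> zero_mor C (F \<cdot> g) \<longrightarrow>
      (\<exists>!h. h \<in> Hom C (dm C g) (dm C m) \<and> m \<cdot> h = g)"
    using K unfolding kernel_def by (elim conjE)
  have "zero_mor C (F \<cdot> g)"
    using zero_mor_iff[OF comp_in_Hom[OF g F]] Fg by simp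
  moreover have "cd C g = dm C F"
    using HomD[OF g] HomD[OF F] by simp
  ultimately have "\<exists>h. h \<in> Hom C (dm C g) (dm C m) \<and> m \<cdot> h = g"
    using lift HomD(1)[OF g] ex1_implies_ex by blast
  then show thesis
    using that HomD[OF g] HomD[OF m] by auto
qed

lemma biproductD:
  assumes B: "biproduct C X1 X2 P s1 r1 s2 r2"
  shows "P \<in> obj C" "s1 \<in> Hom C X1 P" "r1 \<in> Hom C P X1" "s2 \<in> Hom C X2 P" "r2 \<in> Hom C P X2"
    "r1 \<cdot> s1 = idt C X1" "r2 \<cdot> s2 = idt C X2"
    "r2 \<cdot> s1 = zero_hom X1 X2" "r1 \<cdot> s2 = zero_hom X2 X1"
proof -
  have "P \<in> obj C \<and> s1 \<in> Hom C X1 P \<and> r1 \<in> Hom C P X1 \<and> s2 \<in> Hom C X2 P \<and> r2 \<in> Hom C P X2 \<and>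
      r1 \<cdot> s1 = idt C X1 \<and> r2 \<cdot> s2 = idt C X2 \<and> zero_mor C (r2 \<cdot> s1) \<and> zero_mor C (r1 \<cdot> s2)"
    using B unfolding biproduct_def by (elim conjE) (intro conjI; assumption)
  then show "P \<in> obj C" "s1 \<in> Hom C X1 P" "r1 \<in> Hom C P X1" "s2 \<in> Hom C X2 P" "r2 \<in> Hom C P X2"
    "r1 \<cdot> s1 = idt C X1" "r2 \<cdot> s2 = idt C X2"
    "r2 \<cdot> s1 = zero_hom X1 X2" "r1 \<cdot> s2 = zero_hom X2 X1"
    using zero_mor_iff[of "r2 \<cdot> s1" X1 X2] zero_mor_iff[of "r1 \<cdot> s2" X2 X1] comp_in_Hom by blast+
qed

end

locale semiadditive_category = zero_category C for C :: "('o,'m,'z) star_cat_scheme" +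
  fixes dsum :: "'o \<Rightarrow> 'o \<Rightarrow> 'o"
    and in1 pr1 in2 pr2 :: "'o \<Rightarrow> 'o \<Rightarrow> 'm"
  assumes biproduct_dsum:
    "X \<in> obj C \<Longrightarrow> Y \<in> obj C \<Longrightarrow>
      biproduct C X Y (dsum X Y) (in1 X Y) (pr1 X Y) (in2 X Y) (pr2 X Y)"
begin

lemmas dsum_in_obj = biproductD(1)[OF biproduct_dsum]
  and in1_in_Hom = biproductD(2)[OF biproduct_dsum]
  and pr1_in_Hom = biproductD(3)[OF biproduct_dsum]
  and in2_in_Hom = biproductD(4)[OF biproduct_dsum]
  and pr2_in_Hom = biproductD(5)[OF biproduct_dsum]
  and pr1_in1 = biproductD(6)[OF biproduct_dsum]
  and pr2_in2 = biproductD(7)[OF biproduct_dsum]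
  and pr2_in1 = biproductD(8)[OF biproduct_dsum]
  and pr1_in2 = biproductD(9)[OF biproduct_dsum]

lemma dsum_tuple_ex1:
  assumes f: "f \<in> Hom C W X" and g: "g \<in> Hom C W Y"
  shows "\<exists>!h. h \<in> Hom C W (dsum X Y) \<and> pr1 X Y \<cdot> h = f \<and> pr2 X Y \<cdot> h = g"
proof -
  have "\<forall>W\<in>obj C. \<forall>f\<in>Hom C W X. \<forall>g\<in>Hom C W Y.
      \<exists>!h. h \<in> Hom C W (dsum X Y) \<and> pr1 X Y \<cdot> h = f \<and> pr2 X Y \<cdot> h = g"
    using biproduct_dsum[OF Hom_obj(2)[OF f] Hom_obj(2)[OF g]] unfolding biproduct_def
    by (elim conjE)
  from this[rule_format, OF Hom_obj(1)[OF f] f g] show ?thesis .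
qed

lemma dsum_cotuple_ex1:
  assumes f: "f \<in> Hom C X Z" and g: "g \<in> Hom C Y Z"
  shows "\<exists>!h. h \<in> Hom C (dsum X Y) Z \<and> h \<cdot> in1 X Y = f \<and> h \<cdot> in2 X Y = g"
proof -
  have "\<forall>Z\<in>obj C. \<forall>f\<in>Hom C X Z. \<forall>g\<in>Hom C Y Z.
      \<exists>!h. h \<in> Hom C (dsum X Y) Z \<and> h \<cdot> in1 X Y = f \<and> h \<cdot> in2 X Y = g"
    using biproduct_dsum[OF Hom_obj(1)[OF f] Hom_obj(1)[OF g]] unfolding biproduct_def
    by (elim conjE)
  from this[rule_format, OF Hom_obj(2)[OF f] f g] show ?thesis .
qed

lemma dsum_to_eqI:
  assumes X: "X \<in> obj C" and Y: "Y \<in> obj C"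
    and h: "h \<in> Hom C W (dsum X Y)" and h': "h' \<in> Hom C W (dsum X Y)"
    and "pr1 X Y \<cdot> h = pr1 X Y \<cdot> h'" "pr2 X Y \<cdot> h = pr2 X Y \<cdot> h'"
  shows "h = h'"
proof -
  let ?P = "\<lambda>k. k \<in> Hom C W (dsum X Y) \<and> pr1 X Y \<cdot> k = pr1 X Y \<cdot> h \<and> pr2 X Y \<cdot> k = pr2 X Y \<cdot> h"
  have "\<exists>!k. ?P k"
    by (rule dsum_tuple_ex1[OF comp_in_Hom[OF h pr1_in_Hom[OF X Y]] comp_in_Hom[OF h pr2_in_Hom[OF X Y]]])
  moreover have "?P h" "?P h'"
    using assms by simp_all
  ultimately show ?thesis
    using the1_equality by metis
qed

lemma dsum_from_eqI:
  assumes X: "X \<in> obj C" and Y: "Y \<in> obj C"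
    and h: "h \<in> Hom C (dsum X Y) Z" and h': "h' \<in> Hom C (dsum X Y) Z"
    and "h \<cdot> in1 X Y = h' \<cdot> in1 X Y" "h \<cdot> in2 X Y = h' \<cdot> in2 X Y"
  shows "h = h'"
proof -
  let ?P = "\<lambda>k. k \<in> Hom C (dsum X Y) Z \<and> k \<cdot> in1 X Y = h \<cdot> in1 X Y \<and> k \<cdot> in2 X Y = h \<cdot> in2 X Y"
  have "\<exists>!k. ?P k"
    by (rule dsum_cotuple_ex1[OF comp_in_Hom[OF in1_in_Hom[OF X Y] h] comp_in_Hom[OF in2_in_Hom[OF X Y] h]])
  moreover have "?P h" "?P h'"
    using assms by simp_all
  ultimately show ?thesis
    using the1_equality by metis
qed

definition tuple :: "'m \<Rightarrow> 'm \<Rightarrow> 'm" where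
  "tuple f g = (THE h. h \<in> Hom C (dm C f) (dsum (cd C f) (cd C g)) \<and>
     pr1 (cd C f) (cd C g) \<cdot> h = f \<and> pr2 (cd C f) (cd C g) \<cdot> h = g)"

definition cotuple :: "'m \<Rightarrow> 'm \<Rightarrow> 'm" where
  "cotuple f g = (THE h. h \<in> Hom C (dsum (dm C f) (dm C g)) (cd C f) \<and>
     h \<cdot> in1 (dm C f) (dm C g) = f \<and> h \<cdot> in2 (dm C f) (dm C g) = g)"

lemma
  assumes f: "f \<in> Hom C W X" and g: "g \<in> Hom C W Y"
  shows tuple_in_Hom: "tuple f g \<in> Hom C W (dsum X Y)"
    and pr1_tuple: "pr1 X Y \<cdot> tuple f g = f"
    and pr2_tuple: "pr2 X Y \<cdot> tuple f g = g"
proof -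
  have "tuple f g \<in> Hom C W (dsum X Y) \<and> pr1 X Y \<cdot> tuple f g = f \<and> pr2 X Y \<cdot> tuple f g = g"
    unfolding tuple_def HomD[OF f] HomD[OF g] by (rule theI'[OF dsum_tuple_ex1[OF f g]])
  then show "tuple f g \<in> Hom C W (dsum X Y)" "pr1 X Y \<cdot> tuple f g = f" "pr2 X Y \<cdot> tuple f g = g"
    by auto
qed

lemma
  assumes f: "f \<in> Hom C X Z" and g: "g \<in> Hom C Y Z"
  shows cotuple_in_Hom: "cotuple f g \<in> Hom C (dsum X Y) Z"
    and cotuple_in1: "cotuple f g \<cdot> in1 X Y = f"
    and cotuple_in2: "cotuple f g \<cdot> in2 X Y = g"
proof -
  have "cotuple f g \<in> Hom C (dsum X Y) Z \<and> cotuple f g \<cdot> in1 X Y = f \<and> cotuple f g \<cdot> in2 X Y = g"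
    unfolding cotuple_def HomD[OF f] HomD[OF g] by (rule theI'[OF dsum_cotuple_ex1[OF f g]])
  then show "cotuple f g \<in> Hom C (dsum X Y) Z" "cotuple f g \<cdot> in1 X Y = f"
    "cotuple f g \<cdot> in2 X Y = g"
    by auto
qed

lemma tuple_comp:
  assumes f: "f \<in> Hom C W X" and g: "g \<in> Hom C W Y" and k: "k \<in> Hom C V W"
  shows "tuple f g \<cdot> k = tuple (f \<cdot> k) (g \<cdot> k)"
proof (rule dsum_to_eqI)
  show X: "X \<in> obj C" and Y: "Y \<in> obj C"
    using Hom_obj f g by auto
  show "tuple f g \<cdot> k \<in> Hom C V (dsum X Y)" "tuple (f \<cdot> k) (g \<cdot> k) \<in> Hom C V (dsum X Y)"
    using comp_in_Hom[OF k tuple_in_Hom[OF f g]] tuple_in_Hom[OF comp_in_Hom[OF k f] comp_in_Hom[OF k g]]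
    by auto
  show "pr1 X Y \<cdot> (tuple f g \<cdot> k) = pr1 X Y \<cdot> tuple (f \<cdot> k) (g \<cdot> k)"
    using comp_assoc[OF k tuple_in_Hom[OF f g] pr1_in_Hom[OF X Y]] pr1_tuple[OF f g]
        pr1_tuple[OF comp_in_Hom[OF k f] comp_in_Hom[OF k g]] by simp
  show "pr2 X Y \<cdot> (tuple f g \<cdot> k) = pr2 X Y \<cdot> tuple (f \<cdot> k) (g \<cdot> k)"
    using comp_assoc[OF k tuple_in_Hom[OF f g] pr2_in_Hom[OF X Y]] pr2_tuple[OF f g]
        pr2_tuple[OF comp_in_Hom[OF k f] comp_in_Hom[OF k g]] by simp
qed

lemma comp_cotuple:
  assumes f: "f \<in> Hom C X Z" and g: "g \<in> Hom C Y Z" and k: "k \<in> Hom C Z V"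
  shows "k \<cdot> cotuple f g = cotuple (k \<cdot> f) (k \<cdot> g)"
proof (rule dsum_from_eqI)
  show X: "X \<in> obj C" and Y: "Y \<in> obj C"
    using Hom_obj f g by auto
  show "k \<cdot> cotuple f g \<in> Hom C (dsum X Y) V" "cotuple (k \<cdot> f) (k \<cdot> g) \<in> Hom C (dsum X Y) V"
    using comp_in_Hom[OF cotuple_in_Hom[OF f g] k] cotuple_in_Hom[OF comp_in_Hom[OF f k] comp_in_Hom[OF g k]]
    by auto
  show "(k \<cdot> cotuple f g) \<cdot> in1 X Y = cotuple (k \<cdot> f) (k \<cdot> g) \<cdot> in1 X Y"
    using comp_assoc[OF in1_in_Hom[OF X Y] cotuple_in_Hom[OF f g] k] cotuple_in1[OF f g]
        cotuple_in1[OF comp_in_Hom[OF f k] comp_in_Hom[OF g k]] by simp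
  show "(k \<cdot> cotuple f g) \<cdot> in2 X Y = cotuple (k \<cdot> f) (k \<cdot> g) \<cdot> in2 X Y"
    using comp_assoc[OF in2_in_Hom[OF X Y] cotuple_in_Hom[OF f g] k] cotuple_in2[OF f g]
        cotuple_in2[OF comp_in_Hom[OF f k] comp_in_Hom[OF g k]] by simp
qed

definition diag :: "'o \<Rightarrow> 'm" where
  "diag X = tuple (idt C X) (idt C X)"

definition codiag :: "'o \<Rightarrow> 'm" where
  "codiag X = cotuple (idt C X) (idt C X)"

lemma
  assumes X: "X \<in> obj C"
  shows diag_in_Hom: "diag X \<in> Hom C X (dsum X X)"
    and pr1_diag: "pr1 X X \<cdot> diag X = idt C X"
    and pr2_diag: "pr2 X X \<cdot> diag X = idt C X"
proof -
  have I: "idt C X \<in> Hom C X X"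
    using X ..
  show "diag X \<in> Hom C X (dsum X X)" "pr1 X X \<cdot> diag X = idt C X" "pr2 X X \<cdot> diag X = idt C X"
    unfolding diag_def by (fact tuple_in_Hom[OF I I] pr1_tuple[OF I I] pr2_tuple[OF I I])+
qed

lemma
  assumes X: "X \<in> obj C"
  shows codiag_in_Hom: "codiag X \<in> Hom C (dsum X X) X"
    and codiag_in1: "codiag X \<cdot> in1 X X = idt C X"
    and codiag_in2: "codiag X \<cdot> in2 X X = idt C X"
proof -
  have I: "idt C X \<in> Hom C X X"
    using X ..
  show "codiag X \<in> Hom C (dsum X X) X" "codiag X \<cdot> in1 X X = idt C X" "codiag X \<cdot> in2 X X = idt C X"
    unfolding codiag_def by (fact cotuple_in_Hom[OF I I] cotuple_in1[OF I I] cotuple_in2[OF I I])+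
qed

definition hadd :: "'m \<Rightarrow> 'm \<Rightarrow> 'm" (infixl "\<boxplus>" 65) where
  "f \<boxplus> g = cotuple f g \<cdot> diag (dm C f)"

text \<open>The same sum computed through the codiagonal; Eckmann--Hilton shows the two agree.\<close>

definition codiag_sum :: "'m \<Rightarrow> 'm \<Rightarrow> 'm" where
  "codiag_sum f g = codiag (cd C f) \<cdot> tuple f g"

lemma hadd_in_Hom [intro]:
  assumes f: "f \<in> Hom C X Y" and g: "g \<in> Hom C X Y"
  shows "f \<boxplus> g \<in> Hom C X Y"
  unfolding hadd_def HomD(2)[OF f]
  using cotuple_in_Hom[OF f g] diag_in_Hom[OF Hom_obj(1)[OF f]] by blast

lemma codiag_sum_in_Hom:
  assumes f: "f \<in> Hom C X Y" and g: "g \<in> Hom C X Y"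
  shows "codiag_sum f g \<in> Hom C X Y"
  unfolding codiag_sum_def HomD(3)[OF f]
  using tuple_in_Hom[OF f g] codiag_in_Hom[OF Hom_obj(2)[OF f]] by blast

lemma cotuple_zero_right:
  assumes f: "f \<in> Hom C X Z" and X': "X' \<in> obj C"
  shows "cotuple f (zero_hom X' Z) = f \<cdot> pr1 X X'"
proof -
  have X: "X \<in> obj C" and Z: "Z \<in> obj C"
    using Hom_obj[OF f] by auto
  show ?thesis
  proof (rule dsum_from_eqI[OF X X'])
    show "cotuple f (zero_hom X' Z) \<in> Hom C (dsum X X') Z" "f \<cdot> pr1 X X' \<in> Hom C (dsum X X') Z"
      using cotuple_in_Hom[OF f zero_hom_in_Hom[OF X' Z]] comp_in_Hom[OF pr1_in_Hom[OF X X'] f] by auto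
    show "cotuple f (zero_hom X' Z) \<cdot> in1 X X' = (f \<cdot> pr1 X X') \<cdot> in1 X X'"
      using cotuple_in1[OF f zero_hom_in_Hom[OF X' Z]] comp_assoc[OF in1_in_Hom[OF X X'] pr1_in_Hom[OF X X'] f]
        pr1_in1[OF X X'] id_right[OF f] by simp
    show "cotuple f (zero_hom X' Z) \<cdot> in2 X X' = (f \<cdot> pr1 X X') \<cdot> in2 X X'"
      using cotuple_in2[OF f zero_hom_in_Hom[OF X' Z]] comp_assoc[OF in2_in_Hom[OF X X'] pr1_in_Hom[OF X X'] f]
        pr1_in2[OF X X'] comp_zero_hom[OF f X'] by simp
  qed
qed

lemma cotuple_zero_left:
  assumes g: "g \<in> Hom C Y Z" and X: "X \<in> obj C"
  shows "cotuple (zero_hom X Z) g = g \<cdot> pr2 X Y"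
proof -
  have Y: "Y \<in> obj C" and Z: "Z \<in> obj C"
    using Hom_obj[OF g] by auto
  show ?thesis
  proof (rule dsum_from_eqI[OF X Y])
    show "cotuple (zero_hom X Z) g \<in> Hom C (dsum X Y) Z" "g \<cdot> pr2 X Y \<in> Hom C (dsum X Y) Z"
      using cotuple_in_Hom[OF zero_hom_in_Hom[OF X Z] g] comp_in_Hom[OF pr2_in_Hom[OF X Y] g] by auto
    show "cotuple (zero_hom X Z) g \<cdot> in1 X Y = (g \<cdot> pr2 X Y) \<cdot> in1 X Y"
      using cotuple_in1[OF zero_hom_in_Hom[OF X Z] g] comp_assoc[OF in1_in_Hom[OF X Y] pr2_in_Hom[OF X Y] g]
        pr2_in1[OF X Y] comp_zero_hom[OF g X] by simp
    show "cotuple (zero_hom X Z) g \<cdot> in2 X Y = (g \<cdot> pr2 X Y) \<cdot> in2 X Y"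
      using cotuple_in2[OF zero_hom_in_Hom[OF X Z] g] comp_assoc[OF in2_in_Hom[OF X Y] pr2_in_Hom[OF X Y] g]
        pr2_in2[OF X Y] id_right[OF g] by simp
  qed
qed

lemma tuple_zero_right:
  assumes f: "f \<in> Hom C W X" and Y: "Y \<in> obj C"
  shows "tuple f (zero_hom W Y) = in1 X Y \<cdot> f"
proof -
  have W: "W \<in> obj C" and X: "X \<in> obj C"
    using Hom_obj[OF f] by auto
  show ?thesis
  proof (rule dsum_to_eqI[OF X Y])
    show "tuple f (zero_hom W Y) \<in> Hom C W (dsum X Y)" "in1 X Y \<cdot> f \<in> Hom C W (dsum X Y)"
      using tuple_in_Hom[OF f zero_hom_in_Hom[OF W Y]] comp_in_Hom[OF f in1_in_Hom[OF X Y]] by auto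
    show "pr1 X Y \<cdot> tuple f (zero_hom W Y) = pr1 X Y \<cdot> (in1 X Y \<cdot> f)"
      using pr1_tuple[OF f zero_hom_in_Hom[OF W Y]] comp_assoc[OF f in1_in_Hom[OF X Y] pr1_in_Hom[OF X Y]]
        pr1_in1[OF X Y] id_left[OF f] by simp
    show "pr2 X Y \<cdot> tuple f (zero_hom W Y) = pr2 X Y \<cdot> (in1 X Y \<cdot> f)"
      using pr2_tuple[OF f zero_hom_in_Hom[OF W Y]] comp_assoc[OF f in1_in_Hom[OF X Y] pr2_in_Hom[OF X Y]]
        pr2_in1[OF X Y] zero_hom_comp[OF f Y] by simp
  qed
qed

lemma tuple_zero_left:
  assumes g: "g \<in> Hom C W Y" and X: "X \<in> obj C"
  shows "tuple (zero_hom W X) g = in2 X Y \<cdot> g"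
proof -
  have W: "W \<in> obj C" and Y: "Y \<in> obj C"
    using Hom_obj[OF g] by auto
  show ?thesis
  proof (rule dsum_to_eqI[OF X Y])
    show "tuple (zero_hom W X) g \<in> Hom C W (dsum X Y)" "in2 X Y \<cdot> g \<in> Hom C W (dsum X Y)"
      using tuple_in_Hom[OF zero_hom_in_Hom[OF W X] g] comp_in_Hom[OF g in2_in_Hom[OF X Y]] by auto
    show "pr1 X Y \<cdot> tuple (zero_hom W X) g = pr1 X Y \<cdot> (in2 X Y \<cdot> g)"
      using pr1_tuple[OF zero_hom_in_Hom[OF W X] g] comp_assoc[OF g in2_in_Hom[OF X Y] pr1_in_Hom[OF X Y]]
        pr1_in2[OF X Y] zero_hom_comp[OF g X] by simp
    show "pr2 X Y \<cdot> tuple (zero_hom W X) g = pr2 X Y \<cdot> (in2 X Y \<cdot> g)"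
      using pr2_tuple[OF zero_hom_in_Hom[OF W X] g] comp_assoc[OF g in2_in_Hom[OF X Y] pr2_in_Hom[OF X Y]]
        pr2_in2[OF X Y] id_left[OF g] by simp
  qed
qed

lemma hadd_zero_right:
  assumes f: "f \<in> Hom C X Y"
  shows "f \<boxplus> zero_hom X Y = f"
proof -
  have X: "X \<in> obj C" and Y: "Y \<in> obj C"
    using Hom_obj[OF f] by auto
  have "f \<boxplus> zero_hom X Y = (f \<cdot> pr1 X X) \<cdot> diag X"
    unfolding hadd_def HomD(2)[OF f] cotuple_zero_right[OF f X] ..
  also have "\<dots> = f"
    using comp_assoc[OF diag_in_Hom[OF X] pr1_in_Hom[OF X X] f] pr1_diag[OF X] id_right[OF f] by simp
  finally show ?thesis .
qed

lemma hadd_zero_left: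
  assumes f: "f \<in> Hom C X Y"
  shows "zero_hom X Y \<boxplus> f = f"
proof -
  have X: "X \<in> obj C" and Y: "Y \<in> obj C"
    using Hom_obj[OF f] by auto
  have "zero_hom X Y \<boxplus> f = (f \<cdot> pr2 X X) \<cdot> diag X"
    unfolding hadd_def HomD(2)[OF zero_hom_in_Hom[OF X Y]] cotuple_zero_left[OF f X] ..
  also have "\<dots> = f"
    using comp_assoc[OF diag_in_Hom[OF X] pr2_in_Hom[OF X X] f] pr2_diag[OF X] id_right[OF f] by simp
  finally show ?thesis .
qed

lemma codiag_sum_zero_right:
  assumes f: "f \<in> Hom C X Y"
  shows "codiag_sum f (zero_hom X Y) = f"
proof -
  have X: "X \<in> obj C" and Y: "Y \<in> obj C"
    using Hom_obj[OF f] by auto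
  have "codiag_sum f (zero_hom X Y) = codiag Y \<cdot> (in1 Y Y \<cdot> f)"
    unfolding codiag_sum_def HomD(3)[OF f] tuple_zero_right[OF f Y] ..
  also have "\<dots> = f"
    using comp_assoc[OF f in1_in_Hom[OF Y Y] codiag_in_Hom[OF Y]] codiag_in1[OF Y] id_left[OF f] by simp
  finally show ?thesis .
qed

lemma codiag_sum_zero_left:
  assumes f: "f \<in> Hom C X Y"
  shows "codiag_sum (zero_hom X Y) f = f"
proof -
  have X: "X \<in> obj C" and Y: "Y \<in> obj C"
    using Hom_obj[OF f] by auto
  have "codiag_sum (zero_hom X Y) f = codiag Y \<cdot> (in2 Y Y \<cdot> f)"
    unfolding codiag_sum_def HomD(3)[OF zero_hom_in_Hom[OF X Y]] tuple_zero_left[OF f Y] ..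
  also have "\<dots> = f"
    using comp_assoc[OF f in2_in_Hom[OF Y Y] codiag_in_Hom[OF Y]] codiag_in2[OF Y] id_left[OF f] by simp
  finally show ?thesis .
qed

lemma hadd_interchange:
  assumes a: "a \<in> Hom C X Y" and b: "b \<in> Hom C X Y" and c: "c \<in> Hom C X Y" and d: "d \<in> Hom C X Y"
  shows "codiag_sum (a \<boxplus> b) (c \<boxplus> d) = codiag_sum a c \<boxplus> codiag_sum b d"
proof -
  have X: "X \<in> obj C" and Y: "Y \<in> obj C"
    using Hom_obj[OF a] by auto
  have ac: "tuple a c \<in> Hom C X (dsum Y Y)" and bd: "tuple b d \<in> Hom C X (dsum Y Y)"
    using tuple_in_Hom a b c d by blast+
  define M where "M = cotuple (tuple a c) (tuple b d)"
  have M: "M \<in> Hom C (dsum X X) (dsum Y Y)"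
    unfolding M_def by (rule cotuple_in_Hom[OF ac bd])
  have "M \<cdot> diag X = tuple (a \<boxplus> b) (c \<boxplus> d)"
  proof (rule dsum_to_eqI[OF Y Y])
    show "M \<cdot> diag X \<in> Hom C X (dsum Y Y)"
      using diag_in_Hom[OF X] M by (rule comp_in_Hom)
    show "tuple (a \<boxplus> b) (c \<boxplus> d) \<in> Hom C X (dsum Y Y)"
      using tuple_in_Hom hadd_in_Hom a b c d by blast
    have "pr1 Y Y \<cdot> M = cotuple a b"
      unfolding M_def using comp_cotuple[OF ac bd pr1_in_Hom[OF Y Y]] pr1_tuple[OF a c] pr1_tuple[OF b d]
      by simp
    then show "pr1 Y Y \<cdot> (M \<cdot> diag X) = pr1 Y Y \<cdot> tuple (a \<boxplus> b) (c \<boxplus> d)"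
      using comp_assoc[OF diag_in_Hom[OF X] M pr1_in_Hom[OF Y Y]] pr1_tuple[OF hadd_in_Hom[OF a b] hadd_in_Hom[OF c d]]
      unfolding hadd_def HomD(2)[OF a] by simp
    have "pr2 Y Y \<cdot> M = cotuple c d"
      unfolding M_def using comp_cotuple[OF ac bd pr2_in_Hom[OF Y Y]] pr2_tuple[OF a c] pr2_tuple[OF b d]
      by simp
    then show "pr2 Y Y \<cdot> (M \<cdot> diag X) = pr2 Y Y \<cdot> tuple (a \<boxplus> b) (c \<boxplus> d)"
      using comp_assoc[OF diag_in_Hom[OF X] M pr2_in_Hom[OF Y Y]] pr2_tuple[OF hadd_in_Hom[OF a b] hadd_in_Hom[OF c d]]
      unfolding hadd_def HomD(2)[OF c] by simp
  qed
  then have "codiag_sum (a \<boxplus> b) (c \<boxplus> d) = codiag Y \<cdot> (M \<cdot> diag X)"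
    unfolding codiag_sum_def HomD(3)[OF hadd_in_Hom[OF a b]] by simp
  also have "\<dots> = (codiag Y \<cdot> M) \<cdot> diag X"
    using comp_assoc[OF diag_in_Hom[OF X] M codiag_in_Hom[OF Y]] .
  also have "codiag Y \<cdot> M = cotuple (codiag_sum a c) (codiag_sum b d)"
    unfolding M_def codiag_sum_def HomD(3)[OF a] HomD(3)[OF b]
    by (rule comp_cotuple[OF ac bd codiag_in_Hom[OF Y]])
  finally show ?thesis
    unfolding hadd_def HomD(2)[OF codiag_sum_in_Hom[OF a c]] .
qed

lemma codiag_sum_eq_hadd:
  assumes f: "f \<in> Hom C X Y" and g: "g \<in> Hom C X Y"
  shows "codiag_sum f g = f \<boxplus> g"
proof -
  have 0: "zero_hom X Y \<in> Hom C X Y"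
    using Hom_obj[OF f] by blast
  have "f \<boxplus> g = codiag_sum f (zero_hom X Y) \<boxplus> codiag_sum (zero_hom X Y) g"
    using codiag_sum_zero_right[OF f] codiag_sum_zero_left[OF g] by simp
  also have "\<dots> = codiag_sum (f \<boxplus> zero_hom X Y) (zero_hom X Y \<boxplus> g)"
    using hadd_interchange[OF f 0 0 g] by simp
  finally show ?thesis
    using hadd_zero_right[OF f] hadd_zero_left[OF g] by simp
qed

lemma hadd_commute:
  assumes f: "f \<in> Hom C X Y" and g: "g \<in> Hom C X Y"
  shows "f \<boxplus> g = g \<boxplus> f"
proof -
  have 0: "zero_hom X Y \<in> Hom C X Y"
    using Hom_obj[OF f] by blast
  have "f \<boxplus> g = codiag_sum (zero_hom X Y) f \<boxplus> codiag_sum g (zero_hom X Y)"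
    using codiag_sum_zero_left[OF f] codiag_sum_zero_right[OF g] by simp
  also have "\<dots> = codiag_sum (zero_hom X Y \<boxplus> g) (f \<boxplus> zero_hom X Y)"
    using hadd_interchange[OF 0 g f 0] by simp
  finally show ?thesis
    using hadd_zero_right[OF f] hadd_zero_left[OF g] codiag_sum_eq_hadd[OF g f] by simp
qed

lemma hadd_assoc:
  assumes f: "f \<in> Hom C X Y" and g: "g \<in> Hom C X Y" and h: "h \<in> Hom C X Y"
  shows "f \<boxplus> g \<boxplus> h = f \<boxplus> (g \<boxplus> h)"
proof -
  have 0: "zero_hom X Y \<in> Hom C X Y"
    using Hom_obj[OF f] by blast
  have "f \<boxplus> g \<boxplus> h = codiag_sum f g \<boxplus> codiag_sum (zero_hom X Y) h"
    using codiag_sum_eq_hadd[OF f g] codiag_sum_zero_left[OF h] by simp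
  also have "\<dots> = codiag_sum (f \<boxplus> zero_hom X Y) (g \<boxplus> h)"
    using hadd_interchange[OF f 0 g h] by simp
  finally show ?thesis
    using hadd_zero_right[OF f] codiag_sum_eq_hadd[OF f hadd_in_Hom[OF g h]] by simp
qed

lemma comp_hadd:
  assumes f: "f \<in> Hom C X Y" and g: "g \<in> Hom C X Y" and h: "h \<in> Hom C Y Z"
  shows "h \<cdot> (f \<boxplus> g) = h \<cdot> f \<boxplus> h \<cdot> g"
proof -
  have X: "X \<in> obj C"
    using Hom_obj[OF f] by simp
  have "h \<cdot> (f \<boxplus> g) = (h \<cdot> cotuple f g) \<cdot> diag X"
    unfolding hadd_def HomD(2)[OF f] using comp_assoc[OF diag_in_Hom[OF X] cotuple_in_Hom[OF f g] h] .
  also have "\<dots> = cotuple (h \<cdot> f) (h \<cdot> g) \<cdot> diag X"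
    using comp_cotuple[OF f g h] by simp
  finally show ?thesis
    unfolding hadd_def HomD(2)[OF comp_in_Hom[OF f h]] .
qed

lemma hadd_comp:
  assumes f: "f \<in> Hom C X Y" and g: "g \<in> Hom C X Y" and k: "k \<in> Hom C W X"
  shows "(f \<boxplus> g) \<cdot> k = f \<cdot> k \<boxplus> g \<cdot> k"
proof -
  have Y: "Y \<in> obj C"
    using Hom_obj[OF f] by simp
  have "(f \<boxplus> g) \<cdot> k = codiag Y \<cdot> (tuple f g \<cdot> k)"
    unfolding codiag_sum_eq_hadd[OF f g, symmetric] codiag_sum_def HomD(3)[OF f]
    using comp_assoc[OF k tuple_in_Hom[OF f g] codiag_in_Hom[OF Y]] by simp
  also have "\<dots> = codiag_sum (f \<cdot> k) (g \<cdot> k)"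
    unfolding codiag_sum_def HomD(3)[OF comp_in_Hom[OF k f]] tuple_comp[OF f g k] ..
  finally show ?thesis
    using codiag_sum_eq_hadd[OF comp_in_Hom[OF k f] comp_in_Hom[OF k g]] by simp
qed

lemma id_dsum_eq_hadd:
  assumes X: "X \<in> obj C" and Y: "Y \<in> obj C"
  shows "in1 X Y \<cdot> pr1 X Y \<boxplus> in2 X Y \<cdot> pr2 X Y = idt C (dsum X Y)"
proof (rule dsum_to_eqI[OF X Y])
  have i1: "in1 X Y \<cdot> pr1 X Y \<in> Hom C (dsum X Y) (dsum X Y)"
    and i2: "in2 X Y \<cdot> pr2 X Y \<in> Hom C (dsum X Y) (dsum X Y)"
    using in1_in_Hom[OF X Y] pr1_in_Hom[OF X Y] in2_in_Hom[OF X Y] pr2_in_Hom[OF X Y] by blast+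
  show "in1 X Y \<cdot> pr1 X Y \<boxplus> in2 X Y \<cdot> pr2 X Y \<in> Hom C (dsum X Y) (dsum X Y)"
    using i1 i2 by (rule hadd_in_Hom)
  show "idt C (dsum X Y) \<in> Hom C (dsum X Y) (dsum X Y)"
    using dsum_in_obj[OF X Y] by (rule id_in_Hom)
  have "pr1 X Y \<cdot> (in1 X Y \<cdot> pr1 X Y \<boxplus> in2 X Y \<cdot> pr2 X Y)
      = (pr1 X Y \<cdot> in1 X Y) \<cdot> pr1 X Y \<boxplus> (pr1 X Y \<cdot> in2 X Y) \<cdot> pr2 X Y"
    using comp_hadd[OF i1 i2 pr1_in_Hom[OF X Y]]
      comp_assoc[OF pr1_in_Hom[OF X Y] in1_in_Hom[OF X Y] pr1_in_Hom[OF X Y]]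
      comp_assoc[OF pr2_in_Hom[OF X Y] in2_in_Hom[OF X Y] pr1_in_Hom[OF X Y]] by simp
  also have "\<dots> = pr1 X Y"
    using pr1_in1[OF X Y] pr1_in2[OF X Y] id_left[OF pr1_in_Hom[OF X Y]]
      zero_hom_comp[OF pr2_in_Hom[OF X Y] X] hadd_zero_right[OF pr1_in_Hom[OF X Y]] by simp
  finally show "pr1 X Y \<cdot> (in1 X Y \<cdot> pr1 X Y \<boxplus> in2 X Y \<cdot> pr2 X Y) = pr1 X Y \<cdot> idt C (dsum X Y)"
    using id_right[OF pr1_in_Hom[OF X Y]] by simp
  have "pr2 X Y \<cdot> (in1 X Y \<cdot> pr1 X Y \<boxplus> in2 X Y \<cdot> pr2 X Y)
      = (pr2 X Y \<cdot> in1 X Y) \<cdot> pr1 X Y \<boxplus> (pr2 X Y \<cdot> in2 X Y) \<cdot> pr2 X Y"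
    using comp_hadd[OF i1 i2 pr2_in_Hom[OF X Y]]
      comp_assoc[OF pr1_in_Hom[OF X Y] in1_in_Hom[OF X Y] pr2_in_Hom[OF X Y]]
      comp_assoc[OF pr2_in_Hom[OF X Y] in2_in_Hom[OF X Y] pr2_in_Hom[OF X Y]] by simp
  also have "\<dots> = pr2 X Y"
    using pr2_in1[OF X Y] pr2_in2[OF X Y] id_left[OF pr2_in_Hom[OF X Y]]
      zero_hom_comp[OF pr1_in_Hom[OF X Y] Y] hadd_zero_left[OF pr2_in_Hom[OF X Y]] by simp
  finally show "pr2 X Y \<cdot> (in1 X Y \<cdot> pr1 X Y \<boxplus> in2 X Y \<cdot> pr2 X Y) = pr2 X Y \<cdot> idt C (dsum X Y)"
    using id_right[OF pr2_in_Hom[OF X Y]] by simp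
qed

lemma comp_dsum_expand:
  assumes F: "F \<in> Hom C (dsum X Y) Z" and t: "t \<in> Hom C W (dsum X Y)"
    and X: "X \<in> obj C" and Y: "Y \<in> obj C"
  shows "F \<cdot> t = (F \<cdot> in1 X Y) \<cdot> (pr1 X Y \<cdot> t) \<boxplus> (F \<cdot> in2 X Y) \<cdot> (pr2 X Y \<cdot> t)"
proof -
  have i1: "in1 X Y \<cdot> pr1 X Y \<in> Hom C (dsum X Y) (dsum X Y)"
    and i2: "in2 X Y \<cdot> pr2 X Y \<in> Hom C (dsum X Y) (dsum X Y)"
    using in1_in_Hom[OF X Y] pr1_in_Hom[OF X Y] in2_in_Hom[OF X Y] pr2_in_Hom[OF X Y] by blast+
  have "F \<cdot> t = F \<cdot> ((in1 X Y \<cdot> pr1 X Y \<boxplus> in2 X Y \<cdot> pr2 X Y) \<cdot> t)"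
    using id_dsum_eq_hadd[OF X Y] id_left[OF t] by simp
  also have "\<dots> = F \<cdot> ((in1 X Y \<cdot> pr1 X Y) \<cdot> t) \<boxplus> F \<cdot> ((in2 X Y \<cdot> pr2 X Y) \<cdot> t)"
    using hadd_comp[OF i1 i2 t] comp_hadd[OF comp_in_Hom[OF t i1] comp_in_Hom[OF t i2] F] by simp
  also have "F \<cdot> ((in1 X Y \<cdot> pr1 X Y) \<cdot> t) = (F \<cdot> in1 X Y) \<cdot> (pr1 X Y \<cdot> t)"
    using comp_assoc[OF t pr1_in_Hom[OF X Y] in1_in_Hom[OF X Y]]
      comp_assoc[OF comp_in_Hom[OF t pr1_in_Hom[OF X Y]] in1_in_Hom[OF X Y] F] by simp
  also have "F \<cdot> ((in2 X Y \<cdot> pr2 X Y) \<cdot> t) = (F \<cdot> in2 X Y) \<cdot> (pr2 X Y \<cdot> t)"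
    using comp_assoc[OF t pr2_in_Hom[OF X Y] in2_in_Hom[OF X Y]]
      comp_assoc[OF comp_in_Hom[OF t pr2_in_Hom[OF X Y]] in2_in_Hom[OF X Y] F] by simp
  finally show ?thesis .
qed

lemma mzero_Hom:
  assumes X: "X \<in> obj C" and Y: "Y \<in> obj C"
  shows "mzero (Hom C X Y) (\<boxplus>) = zero_hom X Y"
  unfolding mzero_def
proof (rule the_equality)
  show "zero_hom X Y \<in> Hom C X Y \<and> (\<forall>x\<in>Hom C X Y. zero_hom X Y \<boxplus> x = x)"
    using X Y hadd_zero_left by blast
  show "z = zero_hom X Y" if "z \<in> Hom C X Y \<and> (\<forall>x\<in>Hom C X Y. z \<boxplus> x = x)" for z
    using that zero_hom_in_Hom[OF X Y] hadd_zero_right by metis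
qed

lemma ab_enrichment_zero_hom_unit:
  assumes E: "ab_enrichment C pl" and X: "X \<in> obj C" and Y: "Y \<in> obj C"
  shows "comm_group \<lparr>carrier = Hom C X Y, mult = pl, one = zero_hom X Y\<rparr>"
proof -
  obtain e where G: "comm_group \<lparr>carrier = Hom C X Y, mult = pl, one = e\<rparr>"
    using ab_enrichment_group[OF E X Y] .
  obtain Z a b where Z: "zero_object C Z" and a: "a \<in> Hom C X Z" and b: "b \<in> Hom C Z Y"
    and 0: "zero_hom X Y = b \<cdot> a"
    using zero_hom_obtain[OF X Y] .
  obtain e' where G': "comm_group \<lparr>carrier = Hom C X Z, mult = pl, one = e'\<rparr>"
    using ab_enrichment_group[OF E X zero_object_obj[OF Z]] .
  have e': "e' \<in> Hom C X Z" and e'e': "pl e' e' = e'"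
    using monoid.one_closed[OF comm_monoid.axioms(1)[OF comm_group.axioms(1)[OF G']]]
      monoid.l_one[OF comm_monoid.axioms(1)[OF comm_group.axioms(1)[OF G']]] by simp_all
  have "a = e'"
    using zero_object_to_eq[OF Z a e'] .
  moreover have "pl (b \<cdot> e') (b \<cdot> e') = b \<cdot> e'"
    using ab_enrichment_comp_left[OF E e' e' b] e'e' by simp
  then have "b \<cdot> e' = e"
    using group.l_cancel_one[OF comm_group.axioms(2)[OF G], of "b \<cdot> e'" "b \<cdot> e'"]
      comp_in_Hom[OF e' b] by simp
  ultimately show ?thesis
    using G 0 by simp
qed

lemma ab_enrichment_unique:
  assumes E: "ab_enrichment C pl" and f: "f \<in> Hom C X Y" and g: "g \<in> Hom C X Y"
  shows "pl f g = f \<boxplus> g"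
proof -
  have X: "X \<in> obj C"
    using Hom_obj[OF f] by simp
  have pl_zero: "pl x (zero_hom U V) = x" "pl (zero_hom U V) x = x"
    if "U \<in> obj C" "V \<in> obj C" "x \<in> Hom C U V" for U V x
    using monoid.r_one[OF comm_monoid.axioms(1)[OF comm_group.axioms(1)[OF ab_enrichment_zero_hom_unit[OF E that(1,2)]]]]
      monoid.l_one[OF comm_monoid.axioms(1)[OF comm_group.axioms(1)[OF ab_enrichment_zero_hom_unit[OF E that(1,2)]]]]
      that(3) by simp_all
  have i1: "in1 X X \<in> Hom C X (dsum X X)" and i2: "in2 X X \<in> Hom C X (dsum X X)"
    using in1_in_Hom[OF X X] in2_in_Hom[OF X X] .
  have "pl (in1 X X) (in2 X X) = diag X"
  proof (rule dsum_to_eqI[OF X X])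
    show "pl (in1 X X) (in2 X X) \<in> Hom C X (dsum X X)"
      using monoid.m_closed[OF comm_monoid.axioms(1)[OF comm_group.axioms(1)[OF
          ab_enrichment_zero_hom_unit[OF E X dsum_in_obj[OF X X]]]]] i1 i2 by simp
    show "diag X \<in> Hom C X (dsum X X)"
      using X by (rule diag_in_Hom)
    show "pr1 X X \<cdot> pl (in1 X X) (in2 X X) = pr1 X X \<cdot> diag X"
      using ab_enrichment_comp_left[OF E i1 i2 pr1_in_Hom[OF X X]] pr1_in1[OF X X] pr1_in2[OF X X]
        pl_zero(1)[OF X X id_in_Hom[OF X]] pr1_diag[OF X] by simp
    show "pr2 X X \<cdot> pl (in1 X X) (in2 X X) = pr2 X X \<cdot> diag X"
      using ab_enrichment_comp_left[OF E i1 i2 pr2_in_Hom[OF X X]] pr2_in1[OF X X] pr2_in2[OF X X]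
        pl_zero(2)[OF X X id_in_Hom[OF X]] pr2_diag[OF X] by simp
  qed
  then have "cotuple f g \<cdot> diag X = pl (cotuple f g \<cdot> in1 X X) (cotuple f g \<cdot> in2 X X)"
    using ab_enrichment_comp_left[OF E i1 i2 cotuple_in_Hom[OF f g]] by simp
  then show ?thesis
    unfolding hadd_def HomD(2)[OF f] using cotuple_in1[OF f g] cotuple_in2[OF f g] by simp
qed

end

locale additive_category = semiadditive_category C dsum in1 pr1 in2 pr2
  for C :: "('o,'m,'z) star_cat_scheme" and dsum in1 pr1 in2 pr2 +
  assumes hadd_inverse: "f \<in> Hom C X Y \<Longrightarrow> \<exists>g\<in>Hom C X Y. g \<boxplus> f = zero_hom X Y"
begin

lemma comm_group_Hom:
  assumes X: "X \<in> obj C" and Y: "Y \<in> obj C"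
  shows "comm_group \<lparr>carrier = Hom C X Y, mult = (\<boxplus>), one = zero_hom X Y\<rparr>"
  by (rule comm_groupI)
    (use X Y hadd_in_Hom hadd_assoc hadd_commute hadd_zero_left hadd_inverse in auto)

lemma ab_enrichment_hadd: "ab_enrichment C (\<boxplus>)"
  unfolding ab_enrichment_def
proof (intro conjI ballI)
  show "\<exists>z. comm_group \<lparr>carrier = Hom C X Y, mult = (\<boxplus>), one = z\<rparr>"
    if "X \<in> obj C" "Y \<in> obj C" for X Y
    using comm_group_Hom[OF that] ..
  show "h \<cdot> (f \<boxplus> g) = h \<cdot> f \<boxplus> h \<cdot> g" "(f \<boxplus> g) \<cdot> k = f \<cdot> k \<boxplus> g \<cdot> k"
    if "f \<in> Hom C X Y" "g \<in> Hom C X Y" "h \<in> Hom C Y Z" "k \<in> Hom C W X" for W X Y Z f g h k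
    using comp_hadd[OF that(1-3)] hadd_comp[OF that(1,2,4)] by simp_all
qed

lemma ring_endo_ring:
  assumes A: "A \<in> obj C"
  shows "ring (endo_ring C (\<boxplus>) A)"
proof (rule ringI)
  show "abelian_group (endo_ring C (\<boxplus>) A)"
    by (rule abelian_groupI, unfold endo_ring_simps mzero_Hom[OF A A])
      (use A hadd_in_Hom hadd_assoc hadd_commute hadd_zero_left hadd_inverse in auto)
  show "monoid (endo_ring C (\<boxplus>) A)"
    by (rule monoidI, unfold endo_ring_simps)
      (use A comp_in_Hom comp_assoc id_left id_right in auto)
qed (auto simp: endo_ring_simps comp_hadd hadd_comp)

end

locale star_category =
  fixes C :: "('o,'m,'z) star_cat_scheme"
  assumes is_star_category: "is_star_category C"

sublocale star_category \<subseteq> category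
  using is_star_category unfolding is_star_category_def by unfold_locales blast

context star_category
begin

abbreviation dagger :: "'m \<Rightarrow> 'm" ("_\<^sup>\<dagger>" [1000] 1000)
  where "f\<^sup>\<dagger> \<equiv> str C f"

lemma dagger_in_Hom [intro]: "f \<in> Hom C X Y \<Longrightarrow> f\<^sup>\<dagger> \<in> Hom C Y X"
  using is_star_category unfolding is_star_category_def Hom_def by auto

lemma dagger_comp: "f \<in> Hom C X Y \<Longrightarrow> g \<in> Hom C Y Z \<Longrightarrow> (g \<cdot> f)\<^sup>\<dagger> = f\<^sup>\<dagger> \<cdot> g\<^sup>\<dagger>"
  using is_star_category unfolding is_star_category_def Hom_def by auto

lemma dagger_dagger: "f \<in> Hom C X Y \<Longrightarrow> f\<^sup>\<dagger>\<^sup>\<dagger> = f"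
  using is_star_category unfolding is_star_category_def Hom_def by auto

lemma dagger_id: "X \<in> obj C \<Longrightarrow> (idt C X)\<^sup>\<dagger> = idt C X"
  using is_star_category unfolding is_star_category_def by auto

lemma adjoint_of_postcomp:
  assumes f: "f \<in> Hom C X Y"
  shows "adjoint_of (Hom C A X) (Hom C A Y) (\<lambda>x y. x\<^sup>\<dagger> \<cdot> y) (\<lambda>x y. x\<^sup>\<dagger> \<cdot> y)
    (\<lambda>x. f \<cdot> x) (\<lambda>y. f\<^sup>\<dagger> \<cdot> y)"
  unfolding adjoint_of_def
proof (intro conjI ballI)
  show "f \<cdot> x \<in> Hom C A Y" if "x \<in> Hom C A X" for x
    using that f by (rule comp_in_Hom)
  show "f\<^sup>\<dagger> \<cdot> y \<in> Hom C A X" if "y \<in> Hom C A Y" for y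
    using that dagger_in_Hom[OF f] by (rule comp_in_Hom)
  show "(f\<^sup>\<dagger> \<cdot> y)\<^sup>\<dagger> \<cdot> x = y\<^sup>\<dagger> \<cdot> (f \<cdot> x)" if x: "x \<in> Hom C A X" and y: "y \<in> Hom C A Y" for x y
    using dagger_comp[OF y dagger_in_Hom[OF f]] dagger_dagger[OF f]
      comp_assoc[OF x f dagger_in_Hom[OF y]] by simp
qed

end

locale pre_hilbert_category =
  fixes C :: "('o,'m,'z) star_cat_scheme"
    and dsum :: "'o \<Rightarrow> 'o \<Rightarrow> 'o"
    and in1 in2 :: "'o \<Rightarrow> 'o \<Rightarrow> 'm"
  assumes pre_hilbert: "pre_hilbert C"
    and orthonormal_dsum:
      "X \<in> obj C \<Longrightarrow> Y \<in> obj C \<Longrightarrow> orthonormal_biproduct C X Y (dsum X Y) (in1 X Y) (in2 X Y)"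

sublocale pre_hilbert_category \<subseteq> star_category
  using pre_hilbert unfolding pre_hilbert_def by unfold_locales blast

sublocale pre_hilbert_category \<subseteq>
  semiadditive_category C dsum in1 "\<lambda>X Y. str C (in1 X Y)" in2 "\<lambda>X Y. str C (in2 X Y)"
proof unfold_locales
  show "\<exists>Z. zero_object C Z"
    using pre_hilbert unfolding pre_hilbert_def by blast
  show "biproduct C X Y (dsum X Y) (in1 X Y) (in1 X Y)\<^sup>\<dagger> (in2 X Y) (in2 X Y)\<^sup>\<dagger>"
    if "X \<in> obj C" "Y \<in> obj C" for X Y
    using orthonormal_dsum[OF that] unfolding orthonormal_biproduct_def .
qed

context pre_hilbert_category
begin

notation hadd (infixl "\<boxplus>" 65)

lemma isometric_kernel:
  assumes f: "f \<in> Hom C P Y"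
  obtains K m where "m \<in> Hom C K P" "kernel C f m" "m\<^sup>\<dagger> \<cdot> m = idt C K"
proof -
  have "\<forall>f\<in>mor C. \<exists>m. kernel C f m \<and> m\<^sup>\<dagger> \<cdot> m = idt C (dm C m)"
    using pre_hilbert unfolding pre_hilbert_def by (elim conjE)
  then obtain m where m: "kernel C f m" "m\<^sup>\<dagger> \<cdot> m = idt C (dm C m)"
    using HomD(1)[OF f] by blast
  have "m \<in> Hom C (dm C m) P"
    using m(1) HomD[OF f] unfolding kernel_def Hom_def by simp
  then show thesis
    using that m by blast
qed

lemma diagonal_kernel:
  assumes X: "X \<in> obj C"
  obtains F Y where "F \<in> Hom C (dsum X X) Y" "kernel C F (diag X)"
proof -
  have "\<forall>X\<in>obj C. \<forall>P s1 s2 d. orthonormal_biproduct C X X P s1 s2 \<longrightarrow> d \<in> Hom C X P \<longrightarrow>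
      s1\<^sup>\<dagger> \<cdot> d = idt C X \<longrightarrow> s2\<^sup>\<dagger> \<cdot> d = idt C X \<longrightarrow> (\<exists>f\<in>mor C. kernel C f d)"
    using pre_hilbert unfolding pre_hilbert_def by (elim conjE)
  then obtain F where F: "F \<in> mor C" "kernel C F (diag X)"
    using X orthonormal_dsum[OF X X] diag_in_Hom[OF X] pr1_diag[OF X] pr2_diag[OF X] by blast
  have "F \<in> Hom C (dsum X X) (cd C F)"
    using F HomD[OF diag_in_Hom[OF X]] unfolding kernel_def Hom_def by simp
  then show thesis
    using that F(2) by blast
qed

lemma dagger_zero_hom:
  assumes X: "X \<in> obj C" and Y: "Y \<in> obj C"
  shows "(zero_hom X Y)\<^sup>\<dagger> = zero_hom Y X"
proof -
  obtain Z a b where Z: "zero_object C Z" and a: "a \<in> Hom C X Z" and b: "b \<in> Hom C Z Y"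
    and 0: "zero_hom X Y = b \<cdot> a"
    using zero_hom_obtain[OF X Y] .
  show ?thesis
    using 0 dagger_comp[OF a b] zero_hom_factor[OF Z dagger_in_Hom[OF b] dagger_in_Hom[OF a]] by simp
qed

lemma dagger_eq_zero_iff:
  assumes f: "f \<in> Hom C X Y"
  shows "f\<^sup>\<dagger> = zero_hom Y X \<longleftrightarrow> f = zero_hom X Y"
  using dagger_dagger[OF f] dagger_zero_hom Hom_obj[OF f] by metis

lemma dagger_cotuple:
  assumes f: "f \<in> Hom C X Z" and g: "g \<in> Hom C Y Z"
  shows "(cotuple f g)\<^sup>\<dagger> = tuple f\<^sup>\<dagger> g\<^sup>\<dagger>"
proof -
  have X: "X \<in> obj C" and Y: "Y \<in> obj C"
    using Hom_obj f g by auto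
  show ?thesis
  proof (rule dsum_to_eqI[OF X Y])
    show "(cotuple f g)\<^sup>\<dagger> \<in> Hom C Z (dsum X Y)" "tuple f\<^sup>\<dagger> g\<^sup>\<dagger> \<in> Hom C Z (dsum X Y)"
      using dagger_in_Hom[OF cotuple_in_Hom[OF f g]] tuple_in_Hom[OF dagger_in_Hom[OF f] dagger_in_Hom[OF g]]
      by auto
    show "(in1 X Y)\<^sup>\<dagger> \<cdot> (cotuple f g)\<^sup>\<dagger> = (in1 X Y)\<^sup>\<dagger> \<cdot> tuple f\<^sup>\<dagger> g\<^sup>\<dagger>"
      using dagger_comp[OF in1_in_Hom[OF X Y] cotuple_in_Hom[OF f g]] cotuple_in1[OF f g]
        pr1_tuple[OF dagger_in_Hom[OF f] dagger_in_Hom[OF g]] by simp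
    show "(in2 X Y)\<^sup>\<dagger> \<cdot> (cotuple f g)\<^sup>\<dagger> = (in2 X Y)\<^sup>\<dagger> \<cdot> tuple f\<^sup>\<dagger> g\<^sup>\<dagger>"
      using dagger_comp[OF in2_in_Hom[OF X Y] cotuple_in_Hom[OF f g]] cotuple_in2[OF f g]
        pr2_tuple[OF dagger_in_Hom[OF f] dagger_in_Hom[OF g]] by simp
  qed
qed

lemma dagger_tuple:
  assumes f: "f \<in> Hom C W X" and g: "g \<in> Hom C W Y"
  shows "(tuple f g)\<^sup>\<dagger> = cotuple f\<^sup>\<dagger> g\<^sup>\<dagger>"
  using dagger_cotuple[OF dagger_in_Hom[OF f] dagger_in_Hom[OF g]] dagger_dagger f g
    cotuple_in_Hom[OF dagger_in_Hom[OF f] dagger_in_Hom[OF g]] by metis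

lemma dagger_hadd:
  assumes f: "f \<in> Hom C X Y" and g: "g \<in> Hom C X Y"
  shows "(f \<boxplus> g)\<^sup>\<dagger> = f\<^sup>\<dagger> \<boxplus> g\<^sup>\<dagger>"
proof -
  have X: "X \<in> obj C"
    using Hom_obj f by auto
  have "(f \<boxplus> g)\<^sup>\<dagger> = (diag X)\<^sup>\<dagger> \<cdot> tuple f\<^sup>\<dagger> g\<^sup>\<dagger>"
    unfolding hadd_def HomD(2)[OF f]
    using dagger_comp[OF diag_in_Hom[OF X] cotuple_in_Hom[OF f g]] dagger_cotuple[OF f g] by simp
  also have "(diag X)\<^sup>\<dagger> = codiag X"
    unfolding diag_def codiag_def using dagger_tuple[OF id_in_Hom[OF X] id_in_Hom[OF X]] dagger_id[OF X]
    by simp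
  finally show ?thesis
    using codiag_sum_eq_hadd[OF dagger_in_Hom[OF f] dagger_in_Hom[OF g]]
    unfolding codiag_sum_def HomD(3)[OF dagger_in_Hom[OF f]] by simp
qed

lemma dagger_comp_self_eq_zero:
  assumes x: "x \<in> Hom C A X" and xx: "x\<^sup>\<dagger> \<cdot> x = zero_hom A A"
  shows "x = zero_hom A X"
proof -
  have A: "A \<in> obj C"
    using Hom_obj x by simp
  obtain M m where m: "m \<in> Hom C M X" and ker: "kernel C x\<^sup>\<dagger> m" and iso: "m\<^sup>\<dagger> \<cdot> m = idt C M"
    using isometric_kernel[OF dagger_in_Hom[OF x]] .
  obtain h where h: "h \<in> Hom C A M" and mh: "m \<cdot> h = x"
    using kernel_lift[OF ker dagger_in_Hom[OF x] m x xx] .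
  have "h\<^sup>\<dagger> = h\<^sup>\<dagger> \<cdot> (m\<^sup>\<dagger> \<cdot> m)"
    using iso id_right[OF dagger_in_Hom[OF h]] by simp
  also have "\<dots> = x\<^sup>\<dagger> \<cdot> m"
    using comp_assoc[OF m dagger_in_Hom[OF m] dagger_in_Hom[OF h]] dagger_comp[OF h m] mh by simp
  also have "\<dots> = zero_hom M A"
    using kernel_comp_eq_zero[OF ker dagger_in_Hom[OF x] m] .
  finally have "h = zero_hom A M"
    using dagger_eq_zero_iff[OF h] by simp
  then show ?thesis
    using mh comp_zero_hom[OF m A] by simp
qed

lemma diagonal_kernel_eq:
  assumes X: "X \<in> obj C" and F: "F \<in> Hom C (dsum X X) Y" and K: "kernel C F (diag X)"
    and g1: "g1 \<in> Hom C W X" and g2: "g2 \<in> Hom C W X"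
    and sum: "(F \<cdot> in1 X X) \<cdot> g1 \<boxplus> (F \<cdot> in2 X X) \<cdot> g2 = zero_hom W Y"
  shows "g1 = g2"
proof -
  have t: "tuple g1 g2 \<in> Hom C W (dsum X X)"
    using g1 g2 by (rule tuple_in_Hom)
  have "F \<cdot> tuple g1 g2 = zero_hom W Y"
    using comp_dsum_expand[OF F t X X] pr1_tuple[OF g1 g2] pr2_tuple[OF g1 g2] sum by simp
  then obtain h where h: "h \<in> Hom C W X" and dh: "diag X \<cdot> h = tuple g1 g2"
    using kernel_lift[OF K F diag_in_Hom[OF X] t] by blast
  have "g1 = h"
    using pr1_tuple[OF g1 g2] dh comp_assoc[OF h diag_in_Hom[OF X] pr1_in_Hom[OF X X]]
      pr1_diag[OF X] id_left[OF h] by simp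
  moreover have "g2 = h"
    using pr2_tuple[OF g1 g2] dh comp_assoc[OF h diag_in_Hom[OF X] pr2_in_Hom[OF X X]]
      pr2_diag[OF X] id_left[OF h] by simp
  ultimately show ?thesis
    by simp
qed

lemma isometry_unitary:
  assumes j: "j \<in> Hom C Q Z" and iso: "j\<^sup>\<dagger> \<cdot> j = idt C Q"
    and ker: "\<And>W g. g \<in> Hom C W Z \<Longrightarrow> j\<^sup>\<dagger> \<cdot> g = zero_hom W Q \<Longrightarrow> g = zero_hom W Z"
  shows "j \<cdot> j\<^sup>\<dagger> = idt C Z"
proof -
  have Q: "Q \<in> obj C" and Z: "Z \<in> obj C"
    using Hom_obj j by auto
  obtain F Y where F: "F \<in> Hom C (dsum Z Z) Y" and K: "kernel C F (diag Z)"
    using diagonal_kernel[OF Z] .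
  define a where "a = F \<cdot> in1 Z Z"
  define b where "b = F \<cdot> in2 Z Z"
  have a: "a \<in> Hom C Z Y" and b: "b \<in> Hom C Z Y"
    unfolding a_def b_def using in1_in_Hom[OF Z Z] in2_in_Hom[OF Z Z] F by blast+
  have jj: "j \<cdot> j\<^sup>\<dagger> \<in> Hom C Z Z"
    using dagger_in_Hom[OF j] j by (rule comp_in_Hom)
  have Y: "Y \<in> obj C"
    using Hom_obj a by simp
  have "a \<boxplus> b = F \<cdot> diag Z"
    using comp_dsum_expand[OF F diag_in_Hom[OF Z] Z Z] pr1_diag[OF Z] pr2_diag[OF Z]
      id_right[OF a] id_right[OF b] unfolding a_def b_def by simp
  then have ab: "a \<boxplus> b = zero_hom Z Y"
    using kernel_comp_eq_zero[OF K F diag_in_Hom[OF Z]] by simp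
  define c where "c = a \<boxplus> b \<cdot> (j \<cdot> j\<^sup>\<dagger>)"
  have c: "c \<in> Hom C Z Y"
    unfolding c_def using a comp_in_Hom[OF jj b] by (rule hadd_in_Hom)
  have "(b \<cdot> (j \<cdot> j\<^sup>\<dagger>)) \<cdot> j = b \<cdot> j"
    using comp_assoc[OF j jj b] comp_assoc[OF j dagger_in_Hom[OF j] j] iso id_right[OF j] by simp
  then have "c \<cdot> j = (a \<boxplus> b) \<cdot> j"
    unfolding c_def using hadd_comp[OF a comp_in_Hom[OF jj b] j] hadd_comp[OF a b j] by simp
  also have "\<dots> = zero_hom Q Y"
    using ab zero_hom_comp[OF j Y] by simp
  finally have "j\<^sup>\<dagger> \<cdot> c\<^sup>\<dagger> = zero_hom Y Q"
    using dagger_comp[OF j c] dagger_zero_hom[OF Q Y] by simp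
  then have "c = zero_hom Z Y"
    using ker[OF dagger_in_Hom[OF c]] dagger_eq_zero_iff[OF c] by simp
  then have "(F \<cdot> in1 Z Z) \<cdot> idt C Z \<boxplus> (F \<cdot> in2 Z Z) \<cdot> (j \<cdot> j\<^sup>\<dagger>) = zero_hom Z Y"
    using id_right[OF a] unfolding c_def a_def b_def by simp
  then show ?thesis
    using diagonal_kernel_eq[OF Z F K id_in_Hom[OF Z] jj] by simp
qed

lemma cotuple_isometry:
  assumes k: "k \<in> Hom C K P" and l: "l \<in> Hom C L P"
    and kk: "k\<^sup>\<dagger> \<cdot> k = idt C K" and ll: "l\<^sup>\<dagger> \<cdot> l = idt C L" and kl: "k\<^sup>\<dagger> \<cdot> l = zero_hom L K"
  shows "(cotuple k l)\<^sup>\<dagger> \<cdot> cotuple k l = idt C (dsum K L)"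
proof -
  have K: "K \<in> obj C" and L: "L \<in> obj C"
    using Hom_obj k l by auto
  have lk: "l\<^sup>\<dagger> \<cdot> k = zero_hom K L"
    using kl dagger_comp[OF l dagger_in_Hom[OF k]] dagger_dagger[OF k] dagger_zero_hom[OF L K] by metis
  have j: "cotuple k l \<in> Hom C (dsum K L) P"
    using k l by (rule cotuple_in_Hom)
  show ?thesis
  proof (rule dsum_from_eqI[OF K L])
    show "(cotuple k l)\<^sup>\<dagger> \<cdot> cotuple k l \<in> Hom C (dsum K L) (dsum K L)"
      using j dagger_in_Hom[OF j] by (rule comp_in_Hom)
    show "idt C (dsum K L) \<in> Hom C (dsum K L) (dsum K L)"
      using dsum_in_obj[OF K L] by (rule id_in_Hom)
    have "((cotuple k l)\<^sup>\<dagger> \<cdot> cotuple k l) \<cdot> in1 K L = tuple (idt C K) (zero_hom K L)"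
      using comp_assoc[OF in1_in_Hom[OF K L] j dagger_in_Hom[OF j]] cotuple_in1[OF k l]
        dagger_cotuple[OF k l] tuple_comp[OF dagger_in_Hom[OF k] dagger_in_Hom[OF l] k] kk lk by simp
    then show "((cotuple k l)\<^sup>\<dagger> \<cdot> cotuple k l) \<cdot> in1 K L = idt C (dsum K L) \<cdot> in1 K L"
      using tuple_zero_right[OF id_in_Hom[OF K] L] id_right[OF in1_in_Hom[OF K L]]
        id_left[OF in1_in_Hom[OF K L]] by simp
    have "((cotuple k l)\<^sup>\<dagger> \<cdot> cotuple k l) \<cdot> in2 K L = tuple (zero_hom L K) (idt C L)"
      using comp_assoc[OF in2_in_Hom[OF K L] j dagger_in_Hom[OF j]] cotuple_in2[OF k l]
        dagger_cotuple[OF k l] tuple_comp[OF dagger_in_Hom[OF k] dagger_in_Hom[OF l] l] ll kl by simp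
    then show "((cotuple k l)\<^sup>\<dagger> \<cdot> cotuple k l) \<cdot> in2 K L = idt C (dsum K L) \<cdot> in2 K L"
      using tuple_zero_left[OF id_in_Hom[OF L] K] id_right[OF in2_in_Hom[OF K L]]
        id_left[OF in2_in_Hom[OF K L]] by simp
  qed
qed

lemma cotuple_comp_dagger:
  assumes k: "k \<in> Hom C K P" and l: "l \<in> Hom C L P"
  shows "cotuple k l \<cdot> (cotuple k l)\<^sup>\<dagger> = k \<cdot> k\<^sup>\<dagger> \<boxplus> l \<cdot> l\<^sup>\<dagger>"
proof -
  have K: "K \<in> obj C" and L: "L \<in> obj C"
    using Hom_obj k l by auto
  have j: "cotuple k l \<in> Hom C (dsum K L) P"
    using k l by (rule cotuple_in_Hom)
  show ?thesis
    using comp_dsum_expand[OF j dagger_in_Hom[OF j] K L] cotuple_in1[OF k l] cotuple_in2[OF k l]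
      dagger_cotuple[OF k l] pr1_tuple[OF dagger_in_Hom[OF k] dagger_in_Hom[OF l]]
      pr2_tuple[OF dagger_in_Hom[OF k] dagger_in_Hom[OF l]] by simp
qed

lemma isometry_complement:
  assumes k: "k \<in> Hom C K P" and iso: "k\<^sup>\<dagger> \<cdot> k = idt C K"
  obtains L l where "l \<in> Hom C L P" "k \<cdot> k\<^sup>\<dagger> \<boxplus> l \<cdot> l\<^sup>\<dagger> = idt C P"
proof -
  obtain L l where l: "l \<in> Hom C L P" and ker: "kernel C k\<^sup>\<dagger> l" and iso': "l\<^sup>\<dagger> \<cdot> l = idt C L"
    using isometric_kernel[OF dagger_in_Hom[OF k]] .
  have K: "K \<in> obj C" and L: "L \<in> obj C"
    using Hom_obj k l by auto
  have kl: "k\<^sup>\<dagger> \<cdot> l = zero_hom L K"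
    using kernel_comp_eq_zero[OF ker dagger_in_Hom[OF k] l] .
  have "g = zero_hom W P"
    if g: "g \<in> Hom C W P" and jg: "(cotuple k l)\<^sup>\<dagger> \<cdot> g = zero_hom W (dsum K L)" for W g
  proof -
    have W: "W \<in> obj C"
      using Hom_obj g by simp
    have "tuple (k\<^sup>\<dagger> \<cdot> g) (l\<^sup>\<dagger> \<cdot> g) = zero_hom W (dsum K L)"
      using jg dagger_cotuple[OF k l] tuple_comp[OF dagger_in_Hom[OF k] dagger_in_Hom[OF l] g] by simp
    then have kg: "k\<^sup>\<dagger> \<cdot> g = zero_hom W K" and lg: "l\<^sup>\<dagger> \<cdot> g = zero_hom W L"
      using pr1_tuple[OF comp_in_Hom[OF g dagger_in_Hom[OF k]] comp_in_Hom[OF g dagger_in_Hom[OF l]]]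
        pr2_tuple[OF comp_in_Hom[OF g dagger_in_Hom[OF k]] comp_in_Hom[OF g dagger_in_Hom[OF l]]]
        comp_zero_hom[OF pr1_in_Hom[OF K L] W] comp_zero_hom[OF pr2_in_Hom[OF K L] W] by simp_all
    obtain h where h: "h \<in> Hom C W L" and lh: "l \<cdot> h = g"
      using kernel_lift[OF ker dagger_in_Hom[OF k] l g kg] .
    have "h = zero_hom W L"
      using lh lg comp_assoc[OF h l dagger_in_Hom[OF l]] iso' id_left[OF h] by simp
    then show ?thesis
      using lh comp_zero_hom[OF l W] by simp
  qed
  then have "cotuple k l \<cdot> (cotuple k l)\<^sup>\<dagger> = idt C P"
    using isometry_unitary[OF cotuple_in_Hom[OF k l] cotuple_isometry[OF k l iso iso' kl]] by blast
  then show thesis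
    using that l cotuple_comp_dagger[OF k l] by simp
qed

lemma hadd_resolution_off_diagonal:
  assumes k: "k \<in> Hom C K (dsum X Y)" and l: "l \<in> Hom C L (dsum X Y)"
    and X: "X \<in> obj C" and Y: "Y \<in> obj C"
    and res: "k \<cdot> k\<^sup>\<dagger> \<boxplus> l \<cdot> l\<^sup>\<dagger> = idt C (dsum X Y)"
  shows "((in1 X Y)\<^sup>\<dagger> \<cdot> k) \<cdot> ((in2 X Y)\<^sup>\<dagger> \<cdot> k)\<^sup>\<dagger> \<boxplus> ((in1 X Y)\<^sup>\<dagger> \<cdot> l) \<cdot> ((in2 X Y)\<^sup>\<dagger> \<cdot> l)\<^sup>\<dagger>
    = zero_hom Y X"
proof -
  have entry: "(in1 X Y)\<^sup>\<dagger> \<cdot> ((m \<cdot> m\<^sup>\<dagger>) \<cdot> in2 X Y) = ((in1 X Y)\<^sup>\<dagger> \<cdot> m) \<cdot> ((in2 X Y)\<^sup>\<dagger> \<cdot> m)\<^sup>\<dagger>"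
    if m: "m \<in> Hom C M (dsum X Y)" for M m
  proof -
    have "((in2 X Y)\<^sup>\<dagger> \<cdot> m)\<^sup>\<dagger> = m\<^sup>\<dagger> \<cdot> in2 X Y"
      using dagger_comp[OF m pr2_in_Hom[OF X Y]] dagger_dagger[OF in2_in_Hom[OF X Y]] by simp
    then show ?thesis
      using comp_assoc[OF in2_in_Hom[OF X Y] dagger_in_Hom[OF m] m]
        comp_assoc[OF comp_in_Hom[OF in2_in_Hom[OF X Y] dagger_in_Hom[OF m]] m pr1_in_Hom[OF X Y]]
      by simp
  qed
  have kk: "k \<cdot> k\<^sup>\<dagger> \<in> Hom C (dsum X Y) (dsum X Y)" and ll: "l \<cdot> l\<^sup>\<dagger> \<in> Hom C (dsum X Y) (dsum X Y)"
    using k l by blast+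
  have "zero_hom Y X = (in1 X Y)\<^sup>\<dagger> \<cdot> ((k \<cdot> k\<^sup>\<dagger> \<boxplus> l \<cdot> l\<^sup>\<dagger>) \<cdot> in2 X Y)"
    using res id_left[OF in2_in_Hom[OF X Y]] pr1_in2[OF X Y] by simp
  also have "\<dots> = (in1 X Y)\<^sup>\<dagger> \<cdot> ((k \<cdot> k\<^sup>\<dagger>) \<cdot> in2 X Y) \<boxplus> (in1 X Y)\<^sup>\<dagger> \<cdot> ((l \<cdot> l\<^sup>\<dagger>) \<cdot> in2 X Y)"
    using hadd_comp[OF kk ll in2_in_Hom[OF X Y]]
      comp_hadd[OF comp_in_Hom[OF in2_in_Hom[OF X Y] kk] comp_in_Hom[OF in2_in_Hom[OF X Y] ll]
        pr1_in_Hom[OF X Y]] by simp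
  finally show ?thesis
    using entry[OF k] entry[OF l] by simp
qed

lemma diag_isomorphic_isometry:
  assumes X: "X \<in> obj C"
  obtains K w u where "w \<in> Hom C K X" "u \<in> Hom C X K" "w \<cdot> u = idt C X" "u \<cdot> w = idt C K"
    "(diag X \<cdot> w)\<^sup>\<dagger> \<cdot> (diag X \<cdot> w) = idt C K"
proof -
  obtain F Y where F: "F \<in> Hom C (dsum X X) Y" and ker: "kernel C F (diag X)"
    using diagonal_kernel[OF X] .
  obtain K k where k: "k \<in> Hom C K (dsum X X)" and ker': "kernel C F k" and iso: "k\<^sup>\<dagger> \<cdot> k = idt C K"
    using isometric_kernel[OF F] .
  obtain w where w: "w \<in> Hom C K X" and dw: "diag X \<cdot> w = k"
    using kernel_lift[OF ker F diag_in_Hom[OF X] k kernel_comp_eq_zero[OF ker' F k]] .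
  obtain u where u: "u \<in> Hom C X K" and ku: "k \<cdot> u = diag X"
    using kernel_lift[OF ker' F k diag_in_Hom[OF X] kernel_comp_eq_zero[OF ker F diag_in_Hom[OF X]]] .
  have "w \<cdot> u = (in1 X X)\<^sup>\<dagger> \<cdot> (diag X \<cdot> (w \<cdot> u))"
    using comp_assoc[OF comp_in_Hom[OF u w] diag_in_Hom[OF X] pr1_in_Hom[OF X X]] pr1_diag[OF X]
      id_left[OF comp_in_Hom[OF u w]] by simp
  also have "\<dots> = idt C X"
    using comp_assoc[OF u w diag_in_Hom[OF X]] dw ku pr1_diag[OF X] by simp
  finally have wu: "w \<cdot> u = idt C X" .
  have "u \<cdot> w = k\<^sup>\<dagger> \<cdot> (k \<cdot> (u \<cdot> w))"
    using comp_assoc[OF comp_in_Hom[OF w u] k dagger_in_Hom[OF k]] iso id_left[OF comp_in_Hom[OF w u]]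
    by simp
  also have "\<dots> = idt C K"
    using comp_assoc[OF w u k] ku dw iso by simp
  finally have uw: "u \<cdot> w = idt C K" .
  show thesis
    using that[OF w u wu uw] dw iso by simp
qed

lemma id_hadd_inverse:
  assumes X: "X \<in> obj C"
  obtains n where "n \<in> Hom C X X" "idt C X \<boxplus> n = zero_hom X X"
proof -
  obtain K w u where w: "w \<in> Hom C K X" and u: "u \<in> Hom C X K" and wu: "w \<cdot> u = idt C X"
    and uw: "u \<cdot> w = idt C K" and iso: "(diag X \<cdot> w)\<^sup>\<dagger> \<cdot> (diag X \<cdot> w) = idt C K"
    using diag_isomorphic_isometry[OF X] .
  define k where "k = diag X \<cdot> w"
  have k: "k \<in> Hom C K (dsum X X)"
    unfolding k_def using w diag_in_Hom[OF X] by (rule comp_in_Hom)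
  have pr_k: "(in1 X X)\<^sup>\<dagger> \<cdot> k = w" "(in2 X X)\<^sup>\<dagger> \<cdot> k = w"
    unfolding k_def using comp_assoc[OF w diag_in_Hom[OF X] pr1_in_Hom[OF X X]]
      comp_assoc[OF w diag_in_Hom[OF X] pr2_in_Hom[OF X X]] pr1_diag[OF X] pr2_diag[OF X] id_left[OF w]
    by simp_all
  obtain L l where l: "l \<in> Hom C L (dsum X X)" and compl: "k \<cdot> k\<^sup>\<dagger> \<boxplus> l \<cdot> l\<^sup>\<dagger> = idt C (dsum X X)"
    using isometry_complement[OF k iso[folded k_def]] .
  define n where "n = ((in1 X X)\<^sup>\<dagger> \<cdot> l) \<cdot> ((in2 X X)\<^sup>\<dagger> \<cdot> l)\<^sup>\<dagger>"
  have n: "n \<in> Hom C X X"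
    unfolding n_def using l pr1_in_Hom[OF X X] pr2_in_Hom[OF X X] by blast
  have off_diag: "w \<cdot> w\<^sup>\<dagger> \<boxplus> n = zero_hom X X"
    using hadd_resolution_off_diagonal[OF k l X X compl] pr_k unfolding n_def by simp
  have "(w \<cdot> w\<^sup>\<dagger>) \<cdot> (u\<^sup>\<dagger> \<cdot> u) = w \<cdot> ((u \<cdot> w)\<^sup>\<dagger> \<cdot> u)"
    using comp_assoc[OF comp_in_Hom[OF u dagger_in_Hom[OF u]] dagger_in_Hom[OF w] w]
      comp_assoc[OF u dagger_in_Hom[OF u] dagger_in_Hom[OF w]] dagger_comp[OF w u] by simp
  also have "\<dots> = idt C X"
    using uw dagger_id Hom_obj(1)[OF w] id_left[OF u] wu by simp
  finally have "idt C X \<boxplus> n \<cdot> (u\<^sup>\<dagger> \<cdot> u) = (w \<cdot> w\<^sup>\<dagger> \<boxplus> n) \<cdot> (u\<^sup>\<dagger> \<cdot> u)"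
    using hadd_comp[OF comp_in_Hom[OF dagger_in_Hom[OF w] w] n comp_in_Hom[OF u dagger_in_Hom[OF u]]]
    by simp
  also have "\<dots> = zero_hom X X"
    using off_diag zero_hom_comp[OF comp_in_Hom[OF u dagger_in_Hom[OF u]] X] by simp
  finally show thesis
    using that comp_in_Hom[OF comp_in_Hom[OF u dagger_in_Hom[OF u]] n] by blast
qed

lemma hadd_inverse_exists:
  assumes f: "f \<in> Hom C X Y"
  shows "\<exists>g\<in>Hom C X Y. g \<boxplus> f = zero_hom X Y"
proof -
  have X: "X \<in> obj C"
    using Hom_obj f by simp
  obtain n where n: "n \<in> Hom C X X" and n_inv: "idt C X \<boxplus> n = zero_hom X X"
    using id_hadd_inverse[OF X] .
  have "f \<cdot> n \<boxplus> f = f \<cdot> (idt C X \<boxplus> n)"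
    using comp_hadd[OF id_in_Hom[OF X] n f] id_right[OF f] hadd_commute[OF comp_in_Hom[OF n f] f]
    by simp
  also have "\<dots> = zero_hom X Y"
    using n_inv comp_zero_hom[OF f X] by simp
  finally show ?thesis
    using comp_in_Hom[OF n f] by blast
qed

sublocale additive_category C dsum in1 "\<lambda>X Y. (in1 X Y)\<^sup>\<dagger>" in2 "\<lambda>X Y. (in2 X Y)\<^sup>\<dagger>"
  by unfold_locales (rule hadd_inverse_exists)

lemma dagger_tuple_comp_tuple:
  assumes x: "x \<in> Hom C A X" and y: "y \<in> Hom C A Y"
  shows "(tuple x y)\<^sup>\<dagger> \<cdot> tuple x y = x\<^sup>\<dagger> \<cdot> x \<boxplus> y\<^sup>\<dagger> \<cdot> y"
proof -
  have X: "X \<in> obj C" and Y: "Y \<in> obj C"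
    using Hom_obj x y by auto
  have t: "tuple x y \<in> Hom C A (dsum X Y)"
    using x y by (rule tuple_in_Hom)
  show ?thesis
    using comp_dsum_expand[OF dagger_in_Hom[OF t] t X Y] dagger_tuple[OF x y]
      cotuple_in1[OF dagger_in_Hom[OF x] dagger_in_Hom[OF y]] cotuple_in2[OF dagger_in_Hom[OF x] dagger_in_Hom[OF y]]
      pr1_tuple[OF x y] pr2_tuple[OF x y] by simp
qed

lemma pos_cone_of_hadd:
  assumes "a \<in> pos_cone_of C A" "b \<in> pos_cone_of C A"
  shows "a \<boxplus> b \<in> pos_cone_of C A"
proof -
  obtain x X y Y where X: "X \<in> obj C" and x: "x \<in> Hom C A X" and a: "a = x\<^sup>\<dagger> \<cdot> x"
    and Y: "Y \<in> obj C" and y: "y \<in> Hom C A Y" and b: "b = y\<^sup>\<dagger> \<cdot> y"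
    using assms unfolding pos_cone_of_def by blast
  have "a \<boxplus> b = (tuple x y)\<^sup>\<dagger> \<cdot> tuple x y"
    using dagger_tuple_comp_tuple[OF x y] a b by simp
  then show ?thesis
    unfolding pos_cone_of_def using dsum_in_obj[OF X Y] tuple_in_Hom[OF x y] by blast
qed

lemma pos_cone_of_hadd_eq_zero:
  assumes "a \<in> pos_cone_of C A" "b \<in> pos_cone_of C A" and sum: "a \<boxplus> b = zero_hom A A"
  shows "a = zero_hom A A"
proof -
  obtain x X y Y where X: "X \<in> obj C" and x: "x \<in> Hom C A X" and a: "a = x\<^sup>\<dagger> \<cdot> x"
    and Y: "Y \<in> obj C" and y: "y \<in> Hom C A Y" and b: "b = y\<^sup>\<dagger> \<cdot> y"
    using assms unfolding pos_cone_of_def by blast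
  have A: "A \<in> obj C"
    using Hom_obj x by simp
  have "tuple x y = zero_hom A (dsum X Y)"
    using dagger_comp_self_eq_zero[OF tuple_in_Hom[OF x y]] dagger_tuple_comp_tuple[OF x y] sum a b
    by simp
  then have "x = zero_hom A X"
    using pr1_tuple[OF x y] comp_zero_hom[OF pr1_in_Hom[OF X Y] A] by simp
  then show ?thesis
    using a dagger_zero_hom[OF A X] zero_hom_comp[OF zero_hom_in_Hom[OF A X] A] by simp
qed

lemma pos_cone_of_conj:
  assumes r: "r \<in> Hom C A A" and "a \<in> pos_cone_of C A"
  shows "(r\<^sup>\<dagger> \<cdot> a) \<cdot> r \<in> pos_cone_of C A"
proof -
  obtain x X where X: "X \<in> obj C" and x: "x \<in> Hom C A X" and a: "a = x\<^sup>\<dagger> \<cdot> x"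
    using assms(2) unfolding pos_cone_of_def by blast
  have "(r\<^sup>\<dagger> \<cdot> a) \<cdot> r = (x \<cdot> r)\<^sup>\<dagger> \<cdot> (x \<cdot> r)"
    using a dagger_comp[OF r x] comp_assoc[OF r x dagger_in_Hom[OF x]]
      comp_assoc[OF r comp_in_Hom[OF x dagger_in_Hom[OF x]] dagger_in_Hom[OF r]]
      comp_assoc[OF comp_in_Hom[OF r x] dagger_in_Hom[OF x] dagger_in_Hom[OF r]] by simp
  then show ?thesis
    unfolding pos_cone_of_def using X comp_in_Hom[OF r x] by blast
qed

lemma pos_cone_of_self_adjoint:
  assumes "a \<in> pos_cone_of C A"
  shows "a \<in> Hom C A A" "a\<^sup>\<dagger> = a"
proof -
  obtain x X where x: "x \<in> Hom C A X" and a: "a = x\<^sup>\<dagger> \<cdot> x"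
    using assms unfolding pos_cone_of_def by blast
  then show "a \<in> Hom C A A" "a\<^sup>\<dagger> = a"
    using dagger_comp[OF x dagger_in_Hom[OF x]] dagger_dagger[OF x] comp_in_Hom[OF x dagger_in_Hom[OF x]]
    by simp_all
qed

lemma positive_cone_endo_ring:
  assumes A: "A \<in> obj C"
  shows "positive_cone (endo_ring C (\<boxplus>) A) (str C) (pos_cone_of C A)"
  unfolding positive_cone_def endo_ring_simps mzero_Hom[OF A A]
proof (intro conjI ballI subsetI equalityI)
  interpret R: ring "endo_ring C (\<boxplus>) A"
    using A by (rule ring_endo_ring)
  show "a \<in> {a \<in> Hom C A A. a\<^sup>\<dagger> = a}" if "a \<in> pos_cone_of C A" for a
    using pos_cone_of_self_adjoint[OF that] by simp
  show "idt C A \<in> pos_cone_of C A"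
    unfolding pos_cone_of_def using A dagger_id[OF A] id_left[OF id_in_Hom[OF A]] by force
  show "a \<boxplus> b \<in> pos_cone_of C A" if "a \<in> pos_cone_of C A" "b \<in> pos_cone_of C A" for a b
    using that by (rule pos_cone_of_hadd)
  show "(r\<^sup>\<dagger> \<cdot> a) \<cdot> r \<in> pos_cone_of C A" if "r \<in> Hom C A A" "a \<in> pos_cone_of C A" for r a
    using that by (rule pos_cone_of_conj)
  show "a \<in> {zero_hom A A}"
    if mem: "a \<in> pos_cone_of C A \<inter> (\<lambda>a. \<ominus>\<^bsub>endo_ring C (\<boxplus>) A\<^esub> a) ` pos_cone_of C A" for a
  proof -
    obtain b where a: "a \<in> pos_cone_of C A" and b: "b \<in> pos_cone_of C A"
      and ab: "a = \<ominus>\<^bsub>endo_ring C (\<boxplus>) A\<^esub> b"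
      using mem by blast
    have "a \<boxplus> b = zero_hom A A"
      using ab R.l_neg[of b] pos_cone_of_self_adjoint(1)[OF b]
      unfolding endo_ring_simps mzero_Hom[OF A A] by simp
    then show ?thesis
      using pos_cone_of_hadd_eq_zero[OF a b] by simp
  qed
  have "zero_hom A A = (zero_hom A A)\<^sup>\<dagger> \<cdot> zero_hom A A"
    using dagger_zero_hom[OF A A] zero_hom_comp[OF zero_hom_in_Hom[OF A A] A] by simp
  then have "zero_hom A A \<in> pos_cone_of C A"
    unfolding pos_cone_of_def using A zero_hom_in_Hom[OF A A] by blast
  moreover have "zero_hom A A = \<ominus>\<^bsub>endo_ring C (\<boxplus>) A\<^esub> zero_hom A A"
    using R.minus_zero unfolding endo_ring_simps mzero_Hom[OF A A] by simp
  ultimately show "a \<in> pos_cone_of C A \<inter> (\<lambda>a. \<ominus>\<^bsub>endo_ring C (\<boxplus>) A\<^esub> a) ` pos_cone_of C A"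
    if "a \<in> {zero_hom A A}" for a
    using that by blast
qed

lemma star_ring_endo_ring:
  assumes A: "A \<in> obj C"
  shows "star_ring (endo_ring C (\<boxplus>) A) (str C)"
  unfolding star_ring_def endo_ring_simps
proof (intro conjI ballI)
  show "ring (endo_ring C (\<boxplus>) A)"
    using A by (rule ring_endo_ring)
  show "(idt C A)\<^sup>\<dagger> = idt C A"
    using A by (rule dagger_id)
  show "r\<^sup>\<dagger> \<in> Hom C A A" "r\<^sup>\<dagger>\<^sup>\<dagger> = r" if "r \<in> Hom C A A" for r
    using that by (auto intro: dagger_dagger)
  show "(s \<cdot> r)\<^sup>\<dagger> = r\<^sup>\<dagger> \<cdot> s\<^sup>\<dagger>" "(r \<boxplus> s)\<^sup>\<dagger> = r\<^sup>\<dagger> \<boxplus> s\<^sup>\<dagger>"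
    if "r \<in> Hom C A A" "s \<in> Hom C A A" for r s
    using dagger_comp[OF that] dagger_hadd[OF that] by simp_all
qed

lemma ordered_star_ring_endo_ring:
  assumes A: "A \<in> obj C"
  shows "ordered_star_ring (endo_ring C (\<boxplus>) A) (str C) (pos_cone_of C A)"
  unfolding ordered_star_ring_def anisotropic_def endo_ring_simps mzero_Hom[OF A A]
  using star_ring_endo_ring[OF A] dagger_comp_self_eq_zero positive_cone_endo_ring[OF A] by blast

lemma inner_product_module_Hom:
  assumes A: "A \<in> obj C" and X: "X \<in> obj C"
  shows "inner_product_module (endo_ring C (\<boxplus>) A) (str C) (pos_cone_of C A)
    (Hom C A X) (\<boxplus>) (\<lambda>x r. x \<cdot> r) (\<lambda>x y. x\<^sup>\<dagger> \<cdot> y)"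
  unfolding inner_product_module_def right_module_def endo_ring_simps mzero_Hom[OF A A] mzero_Hom[OF A X]
proof (intro conjI ballI impI)
  show "ordered_star_ring (endo_ring C (\<boxplus>) A) (str C) (pos_cone_of C A)"
    using A by (rule ordered_star_ring_endo_ring)
  show "ring (endo_ring C (\<boxplus>) A)"
    using A by (rule ring_endo_ring)
  show "\<exists>z. comm_group \<lparr>carrier = Hom C A X, mult = (\<boxplus>), one = z\<rparr>"
    using comm_group_Hom[OF A X] ..
  show "x \<cdot> r \<in> Hom C A X" if "x \<in> Hom C A X" "r \<in> Hom C A A" for x r
    using that(2,1) by (rule comp_in_Hom)
  show "x\<^sup>\<dagger> \<cdot> y \<in> Hom C A A" if "x \<in> Hom C A X" "y \<in> Hom C A X" for x y
    using that(2) dagger_in_Hom[OF that(1)] by (rule comp_in_Hom)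
  show "(x \<boxplus> y) \<cdot> r = x \<cdot> r \<boxplus> y \<cdot> r" if "x \<in> Hom C A X" "y \<in> Hom C A X" "r \<in> Hom C A A" for x y r
    using that by (rule hadd_comp)
  show "x \<cdot> (r \<boxplus> s) = x \<cdot> r \<boxplus> x \<cdot> s" if "x \<in> Hom C A X" "r \<in> Hom C A A" "s \<in> Hom C A A" for x r s
    using that(2,3,1) by (rule comp_hadd)
  show "x \<cdot> (r \<cdot> s) = (x \<cdot> r) \<cdot> s" if "x \<in> Hom C A X" "r \<in> Hom C A A" "s \<in> Hom C A A" for x r s
    using that(3,2,1) by (rule comp_assoc)
  show "x \<cdot> idt C A = x" if "x \<in> Hom C A X" for x
    using that by (rule id_right)
  show "x\<^sup>\<dagger> \<cdot> (y \<cdot> r \<boxplus> z) = (x\<^sup>\<dagger> \<cdot> y) \<cdot> r \<boxplus> x\<^sup>\<dagger> \<cdot> z"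
    if x: "x \<in> Hom C A X" and y: "y \<in> Hom C A X" and z: "z \<in> Hom C A X" and r: "r \<in> Hom C A A"
    for x y z r
    using comp_hadd[OF comp_in_Hom[OF r y] z dagger_in_Hom[OF x]] comp_assoc[OF r y dagger_in_Hom[OF x]]
    by simp
  show "(x\<^sup>\<dagger> \<cdot> y)\<^sup>\<dagger> = y\<^sup>\<dagger> \<cdot> x" if x: "x \<in> Hom C A X" and y: "y \<in> Hom C A X" for x y
    using dagger_comp[OF y dagger_in_Hom[OF x]] dagger_dagger[OF x] by simp
  show "x\<^sup>\<dagger> \<cdot> x \<in> pos_cone_of C A" if "x \<in> Hom C A X" for x
    unfolding pos_cone_of_def using X that by blast
  show "x = zero_hom A X" if "x \<in> Hom C A X" "x\<^sup>\<dagger> \<cdot> x = zero_hom A A" for x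
    using that by (rule dagger_comp_self_eq_zero)
qed

end

lemma pre_hilbert_category_exists:
  assumes "pre_hilbert C"
  obtains dsum in1 in2 where "pre_hilbert_category C dsum in1 in2"
proof -
  define t where "t X Y = (SOME t. orthonormal_biproduct C X Y (fst t) (fst (snd t)) (snd (snd t)))"
    for X Y
  have "orthonormal_biproduct C X Y (fst (t X Y)) (fst (snd (t X Y))) (snd (snd (t X Y)))"
    if "X \<in> obj C" "Y \<in> obj C" for X Y
  proof -
    have "\<exists>P s1 s2. orthonormal_biproduct C X Y P s1 s2"
      using assms that unfolding pre_hilbert_def by blast
    then show ?thesis
      unfolding t_def by (metis (mono_tags, lifting) fst_conv snd_conv someI_ex)
  qed
  then show thesis
    using that[of "\<lambda>X Y. fst (t X Y)" "\<lambda>X Y. fst (snd (t X Y))" "\<lambda>X Y. snd (snd (t X Y))"] assms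
    unfolding pre_hilbert_category_def by blast
qed

theorem proposition5p12:
  fixes C :: "('o,'m) star_cat" and A :: 'o
  assumes "pre_hilbert C" and "A \<in> obj C"
  shows "\<exists>pl. ab_enrichment C pl \<and>
    (\<forall>pl'. ab_enrichment C pl' \<longrightarrow>
       (\<forall>X\<in>obj C. \<forall>Y\<in>obj C. \<forall>f\<in>Hom C X Y. \<forall>g\<in>Hom C X Y. pl' f g = pl f g)) \<and>
    ordered_star_ring (endo_ring C pl A) (str C) (pos_cone_of C A) \<and>
    (\<forall>X\<in>obj C. inner_product_module (endo_ring C pl A) (str C) (pos_cone_of C A)
        (Hom C A X) pl (\<lambda>x r. cmp C x r) (\<lambda>x y. cmp C (str C x) y)) \<and>
    (\<forall>X\<in>obj C. \<forall>Y\<in>obj C. \<forall>f\<in>Hom C X Y.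
        adjoint_of (Hom C A X) (Hom C A Y) (\<lambda>x y. cmp C (str C x) y) (\<lambda>x y. cmp C (str C x) y)
          (\<lambda>x. cmp C f x) (\<lambda>y. cmp C (str C f) y)) \<and>
    (\<forall>X\<in>obj C. \<forall>x\<in>Hom C A X. cmp C (idt C X) x = x) \<and>
    (\<forall>X\<in>obj C. \<forall>Y\<in>obj C. \<forall>Z\<in>obj C. \<forall>f\<in>Hom C X Y. \<forall>g\<in>Hom C Y Z. \<forall>x\<in>Hom C A X.
        cmp C (cmp C g f) x = cmp C g (cmp C f x))"
proof -
  obtain dsum in1 in2 where "pre_hilbert_category C dsum in1 in2"
    using pre_hilbert_category_exists[OF assms(1)] .
  then interpret pre_hilbert_category C dsum in1 in2 .
  show ?thesis
  proof (intro exI[of _ "(\<boxplus>)"] conjI allI impI ballI)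
    show "ab_enrichment C (\<boxplus>)"
      by (rule ab_enrichment_hadd)
    show "pl' f g = f \<boxplus> g" if "ab_enrichment C pl'" "f \<in> Hom C X Y" "g \<in> Hom C X Y" for pl' X Y f g
      using that by (rule ab_enrichment_unique)
    show "ordered_star_ring (endo_ring C (\<boxplus>) A) (str C) (pos_cone_of C A)"
      using assms(2) by (rule ordered_star_ring_endo_ring)
    show "inner_product_module (endo_ring C (\<boxplus>) A) (str C) (pos_cone_of C A)
        (Hom C A X) (\<boxplus>) (\<lambda>x r. x \<cdot> r) (\<lambda>x y. x\<^sup>\<dagger> \<cdot> y)" if "X \<in> obj C" for X
      using assms(2) that by (rule inner_product_module_Hom)
    show "adjoint_of (Hom C A X) (Hom C A Y) (\<lambda>x y. x\<^sup>\<dagger> \<cdot> y) (\<lambda>x y. x\<^sup>\<dagger> \<cdot> y) (\<lambda>x. f \<cdot> x) (\<lambda>y. f\<^sup>\<dagger> \<cdot> y)"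
      if "f \<in> Hom C X Y" for X Y f
      using that by (rule adjoint_of_postcomp)
    show "idt C X \<cdot> x = x" if "x \<in> Hom C A X" for X x
      using that by (rule id_left)
    show "(g \<cdot> f) \<cdot> x = g \<cdot> (f \<cdot> x)" if "f \<in> Hom C X Y" "g \<in> Hom C Y Z" "x \<in> Hom C A X" for X Y Z f g x
      using comp_assoc[OF that(3,1,2)] by simp
  qed
qed

end
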